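(* Let $M^N$ be a flat, torsionless, totally nonisotropic smooth $N$-dimensional submanifold of a pseudo-Euclidean space $E^{N+L}$. Let $u=(u^1,\dots,u^N)$ be flat coordinates of its first fundamental form on a simply connected domain $U\subset M^N$, and let $\omega_{\alpha,ij}(u)\,du^i du^j$, $1\le\alpha\le L$, be its second fundamental forms with respect to a basis of normals $n_1,\dots,n_L$ with constant Gram matrix. Then on $U$ there exist functions $\psi_\alpha(u)$, $1\le\alpha\le L$, such that $$\omega_{\alpha,ij}(u)=\frac{\partial^2\psi_\alpha}{\partial u^i\partial u^j}\quad\text{for all } i,j,\alpha,$$ i.e. all second fundamental forms are Hessians in the flat coordinates.
   Context: For a submanifold given locally by $r(u^1,\dots,u^N)$ in a pseudo-Euclidean space (totally nonisotropic means the induced metric is nondegenerate), the first fundamental form is $g_{ij}=(r_{u^i},r_{u^j})$. The normal space at each point has a basis $n_1,\dots,n_L$ with constant, symmetric, nondegenerate Gram matrix $\mu_{\alpha\beta}=(n_\alpha,n_\beta)$; the second fundamental forms are $\omega_{\alpha,ij}=(n_\alpha,r_{u^iu^j})$; the torsion forms are $\varkappa_{\alpha\beta,i}\,du^i$ with $\varkappa_{\alpha\beta,i}$ the coefficients of the normal component of $\partial n_\alpha/\partial u^i$ in the decomposition $n_{\alpha,u^i}=A^k_{\alpha,i}r_{u^k}+\varkappa_{\alpha\beta,i}n_\beta$. "Torsionless" means all $\varkappa_{\alpha\beta,i}=0$; "flat" means the first fundamental form has zero Riemann curvature, so there are flat coordinates in which $g_{ij}=\eta_{ij}$ is a constant nondegenerate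 symmetric matrix. *)

theory Defs
  imports "HOL-Analysis.Analysis"
begin

definition pd :: "(real^'n \<Rightarrow> 'a::real_normed_vector) \<Rightarrow> 'n \<Rightarrow> real^'n \<Rightarrow> 'a" where
  "pd f i x = frechet_derivative f (at x) (axis i 1)"

fun iter_pd :: "'n list \<Rightarrow> (real^'n \<Rightarrow> 'a::real_normed_vector) \<Rightarrow> real^'n \<Rightarrow> 'a" where
  "iter_pd [] f = f"
| "iter_pd (i # is) f = pd (iter_pd is f) i"

definition smooth_on :: "(real^'n) set \<Rightarrow> (real^'n \<Rightarrow> 'a::real_normed_vector) \<Rightarrow> bool" where
  "smooth_on U f \<longleftrightarrow> (\<forall>is. iter_pd is f differentiable_on U)"

definition pinner :: "('m::finite \<Rightarrow> real) \<Rightarrow> real^'m \<Rightarrow> real^'m \<Rightarrow> real" where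
  "pinner eps x y = (\<Sum>k\<in>UNIV. eps k * (x $ k) * (y $ k))"

end

theory Submission
  imports Defs
begin

text \<open>
  In flat coordinates the metric (r_i, r_j) is constant; differentiating it and using the symmetry
  of r_ijk shows that the second derivatives r_ij have no tangential component. Since the
  derivatives of a torsionless normal n are tangential, (d_k n, r_ij) = 0, so
  d_k (n, r_ij) = (n, r_ijk) is totally symmetric: the second fundamental form is a symmetric
  Codazzi tensor. On a simply connected domain the closed forms \<omega>_ij du^i then have potentials
  g_j, and the closed form g_j du^j has a potential \<psi> whose Hessian is \<omega>.

  The Poincare lemma is proved on convex sets by radial integration and globalised by continuing
  local primitives along paths; homotopy invariance of the continued values makes the result
  independent of the path.
\<close>

lemma pd_eq_derivative_axis:
  assumes "(f has_derivative F) (at x)"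
  shows "pd f i x = F (axis i 1)"
  using frechet_derivative_at[OF assms] by (simp add: pd_def)

lemma has_derivative_pd_expansion:
  fixes f :: "real^'n \<Rightarrow> 'a::real_normed_vector"
  assumes "f differentiable (at x)"
  shows "(f has_derivative (\<lambda>h. \<Sum>i\<in>UNIV. h $ i *\<^sub>R pd f i x)) (at x)"
proof -
  let ?F = "frechet_derivative f (at x)"
  have F: "(f has_derivative ?F) (at x)"
    using assms frechet_derivative_works by blast
  have "?F h = (\<Sum>i\<in>UNIV. h $ i *\<^sub>R pd f i x)" for h
  proof -
    have "?F h = ?F (\<Sum>i\<in>UNIV. h $ i *\<^sub>R axis i 1)"
      using basis_expansion[of h] by (simp add: scalar_mult_eq_scaleR)
    also have "\<dots> = (\<Sum>i\<in>UNIV. h $ i *\<^sub>R pd f i x)"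
      using has_derivative_linear[OF F] by (simp add: linear_sum linear_scale pd_def)
    finally show ?thesis .
  qed
  then show ?thesis
    using F by (metis (no_types, lifting) ext)
qed

lemma pd_cong_open:
  assumes "open U" "x \<in> U" "\<forall>y\<in>U. f y = g y"
  shows "pd f i x = pd g i x"
proof -
  have "(f has_derivative D) (at x) \<longleftrightarrow> (g has_derivative D) (at x)" for D
    using assms has_derivative_transform_within_open[of f D x UNIV U g]
      has_derivative_transform_within_open[of g D x UNIV U f] by auto
  then show ?thesis
    unfolding pd_def frechet_derivative_def by simp
qed

lemma iter_pd_cong_open:
  assumes "open U" "\<forall>y\<in>U. f y = g y"
  shows "\<forall>y\<in>U. iter_pd is f y = iter_pd is g y"
  by (induction "is") (use assms pd_cong_open[OF assms(1)] in auto)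

lemma iter_pd_append: "iter_pd (is @ js) f = iter_pd is (iter_pd js f)"
  by (induction "is") auto

lemma differentiable_on_cong:
  assumes "\<forall>y\<in>U. f y = g y" "f differentiable_on U"
  shows "g differentiable_on U"
  unfolding differentiable_on_def
proof
  fix x assume x: "x \<in> U"
  then obtain D where "(f has_derivative D) (at x within U)"
    using assms(2) unfolding differentiable_on_def differentiable_def by blast
  then have "(g has_derivative D) (at x within U)"
    by (rule has_derivative_transform_within[of _ _ _ _ 1]) (use assms(1) x in auto)
  then show "g differentiable (at x within U)"
    unfolding differentiable_def by blast
qed

lemma pd_const: "pd (\<lambda>y. c) i x = 0"
  by (simp add: pd_def)

lemma pd_add:
  assumes "f differentiable (at x)" "g differentiable (at x)"
  shows "pd (\<lambda>y. f y + g y) i x = pd f i x + pd g i x"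
  using pd_eq_derivative_axis[OF has_derivative_add[OF assms[unfolded frechet_derivative_works]]]
  by (simp add: pd_def)

lemma pd_mult:
  fixes f g :: "real^'n \<Rightarrow> real"
  assumes "f differentiable (at x)" "g differentiable (at x)"
  shows "pd (\<lambda>y. f y * g y) i x = f x * pd g i x + pd f i x * g x"
  using pd_eq_derivative_axis[OF has_derivative_mult[OF assms[unfolded frechet_derivative_works]]]
  by (simp add: pd_def)

lemma has_derivative_vec_nth:
  "(F has_derivative F') net \<Longrightarrow> ((\<lambda>y. F y $ k) has_derivative (\<lambda>h. F' h $ k)) net"
  by (rule bounded_linear.has_derivative[OF bounded_linear_vec_nth])

lemma pd_vec_nth:
  fixes F :: "real^'n \<Rightarrow> real^'m"
  assumes "F differentiable (at x)"
  shows "pd (\<lambda>y. F y $ k) i x = pd F i x $ k"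
  using pd_eq_derivative_axis[OF has_derivative_vec_nth[OF assms[unfolded frechet_derivative_works]]]
  by (simp add: pd_def)

lemma has_derivative_vec_lambda:
  fixes f :: "'m::finite \<Rightarrow> 'a::real_normed_vector \<Rightarrow> real"
  assumes "\<And>k. (f k has_derivative f' k) (at x)"
  shows "((\<lambda>y. \<chi> k. f k y) has_derivative (\<lambda>h. \<chi> k. f' k h)) (at x)"
proof -
  have "((\<lambda>y. \<Sum>k\<in>UNIV. f k y *\<^sub>R axis k 1) has_derivative (\<lambda>h. \<Sum>k\<in>UNIV. f' k h *\<^sub>R axis k 1)) (at x)"
    by (intro has_derivative_sum has_derivative_scaleR_left assms)
  moreover have "(\<chi> k. g k) = (\<Sum>k\<in>UNIV. g k *\<^sub>R axis k (1::real))" for g :: "'m \<Rightarrow> real"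
    using basis_expansion[of "\<chi> k. g k"] by (simp add: scalar_mult_eq_scaleR)
  ultimately show ?thesis
    by simp
qed

lemma pd_vec_lambda:
  fixes f :: "'m::finite \<Rightarrow> real^'n \<Rightarrow> real"
  assumes "\<And>k. f k differentiable (at x)"
  shows "(\<lambda>y. \<chi> k. f k y) differentiable (at x)"
    and "pd (\<lambda>y. \<chi> k. f k y) i x = (\<chi> k. pd (f k) i x)"
proof -
  have "((\<lambda>y. \<chi> k. f k y) has_derivative (\<lambda>h. \<chi> k. frechet_derivative (f k) (at x) h)) (at x)"
    by (rule has_derivative_vec_lambda) (use assms frechet_derivative_works in blast)
  then show "(\<lambda>y. \<chi> k. f k y) differentiable (at x)" "pd (\<lambda>y. \<chi> k. f k y) i x = (\<chi> k. pd (f k) i x)"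
    unfolding differentiable_def by (auto simp: pd_eq_derivative_axis) (simp add: pd_def)
qed

definition differentiable_upto :: "nat \<Rightarrow> (real^'n) set \<Rightarrow> (real^'n \<Rightarrow> 'a::real_normed_vector) \<Rightarrow> bool" where
  "differentiable_upto k U f \<longleftrightarrow> (\<forall>is. length is \<le> k \<longrightarrow> iter_pd is f differentiable_on U)"

lemma smooth_on_iff_differentiable_upto: "smooth_on U f \<longleftrightarrow> (\<forall>k. differentiable_upto k U f)"
  unfolding smooth_on_def differentiable_upto_def by blast

lemma differentiable_upto_0 [simp]: "differentiable_upto 0 U f \<longleftrightarrow> f differentiable_on U"
  unfolding differentiable_upto_def by auto

lemma differentiable_upto_Suc:
  "differentiable_upto (Suc k) U f \<longleftrightarrow> f differentiable_on U \<and> (\<forall>i. differentiable_upto k U (pd f i))"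
proof
  assume "differentiable_upto (Suc k) U f"
  then have H: "iter_pd is f differentiable_on U" if "length is \<le> Suc k" for "is"
    using that unfolding differentiable_upto_def by blast
  have "f differentiable_on U"
    using H[of "[]"] by simp
  moreover have "differentiable_upto k U (pd f i)" for i
    unfolding differentiable_upto_def using H[of "_ @ [i]"] by (simp add: iter_pd_append)
  ultimately show "f differentiable_on U \<and> (\<forall>i. differentiable_upto k U (pd f i))"
    by blast
next
  assume *: "f differentiable_on U \<and> (\<forall>i. differentiable_upto k U (pd f i))"
  show "differentiable_upto (Suc k) U f"
    unfolding differentiable_upto_def
  proof (intro allI impI)
    fix "is" :: "'a list" assume "length is \<le> Suc k"
    then show "iter_pd is f differentiable_on U"
      using * by (cases "is" rule: rev_exhaust) (auto simp: iter_pd_append differentiable_upto_def)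
  qed
qed

lemma differentiable_upto_Suc_imp: "differentiable_upto (Suc k) U f \<Longrightarrow> differentiable_upto k U f"
  unfolding differentiable_upto_def by auto

lemma differentiable_upto_cong_open:
  assumes "open U" "\<forall>y\<in>U. f y = g y" "differentiable_upto k U f"
  shows "differentiable_upto k U g"
  using assms(3) iter_pd_cong_open[OF assms(1,2)] differentiable_on_cong
  unfolding differentiable_upto_def by blast

lemma differentiable_upto_const: "differentiable_upto k U (\<lambda>x. c)"
proof (induction k arbitrary: c)
  case (Suc k)
  then show ?case
    by (simp add: differentiable_upto_Suc pd_const[abs_def])
qed simp

lemma differentiable_upto_add:
  assumes "open U"
  shows "differentiable_upto k U f \<Longrightarrow> differentiable_upto k U g \<Longrightarrow> differentiable_upto k U (\<lambda>x. f x + g x)"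
proof (induction k arbitrary: f g)
  case (Suc k)
  have "differentiable_upto k U (pd (\<lambda>x. f x + g x) i)" for i
  proof (rule differentiable_upto_cong_open[OF assms])
    show "differentiable_upto k U (\<lambda>x. pd f i x + pd g i x)"
      using Suc by (simp add: differentiable_upto_Suc)
    show "\<forall>y\<in>U. pd f i y + pd g i y = pd (\<lambda>x. f x + g x) i y"
      using Suc.prems assms by (auto simp: differentiable_upto_Suc differentiable_on_eq_differentiable_at pd_add)
  qed
  then show ?case
    using Suc.prems by (simp add: differentiable_upto_Suc)
qed simp

lemma differentiable_upto_mult:
  fixes f g :: "real^'n \<Rightarrow> real"
  assumes "open U"
  shows "differentiable_upto k U f \<Longrightarrow> differentiable_upto k U g \<Longrightarrow> differentiable_upto k U (\<lambda>x. f x * g x)"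
proof (induction k arbitrary: f g)
  case (Suc k)
  have "differentiable_upto k U f" "differentiable_upto k U g"
    using Suc.prems by (auto intro: differentiable_upto_Suc_imp)
  have "differentiable_upto k U (pd (\<lambda>x. f x * g x) i)" for i
  proof (rule differentiable_upto_cong_open[OF assms])
    show "differentiable_upto k U (\<lambda>x. f x * pd g i x + pd f i x * g x)"
      using Suc \<open>differentiable_upto k U f\<close> \<open>differentiable_upto k U g\<close>
      by (intro differentiable_upto_add[OF assms] Suc.IH) (auto simp: differentiable_upto_Suc)
    show "\<forall>y\<in>U. f y * pd g i y + pd f i y * g y = pd (\<lambda>x. f x * g x) i y"
      using Suc.prems assms by (auto simp: differentiable_upto_Suc differentiable_on_eq_differentiable_at pd_mult)
  qed
  then show ?case
    using Suc.prems by (simp add: differentiable_upto_Suc)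
qed simp

lemma differentiable_on_vec_nth:
  "F differentiable_on U \<Longrightarrow> (\<lambda>x. F x $ j) differentiable_on U"
  by (rule differentiable_on_compose[of F U "\<lambda>v. v $ j"])
    (simp_all add: bounded_linear_imp_differentiable_on bounded_linear_vec_nth)

lemma differentiable_upto_vec_nth:
  fixes F :: "real^'n \<Rightarrow> real^'m"
  assumes "open U"
  shows "differentiable_upto k U F \<Longrightarrow> differentiable_upto k U (\<lambda>x. F x $ j)"
proof (induction k arbitrary: F)
  case 0
  then show ?case
    by (simp add: differentiable_on_vec_nth)
next
  case (Suc k)
  have "differentiable_upto k U (pd (\<lambda>x. F x $ j) i)" for i
  proof (rule differentiable_upto_cong_open[OF assms])
    show "differentiable_upto k U (\<lambda>x. pd F i x $ j)"
      using Suc by (simp add: differentiable_upto_Suc)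
    show "\<forall>y\<in>U. pd F i y $ j = pd (\<lambda>x. F x $ j) i y"
      using Suc.prems assms by (auto simp: differentiable_upto_Suc differentiable_on_eq_differentiable_at pd_vec_nth)
  qed
  then show ?case
    using Suc.prems by (simp add: differentiable_upto_Suc differentiable_on_vec_nth)
qed


lemma smooth_on_iff_pd: "smooth_on U f \<longleftrightarrow> f differentiable_on U \<and> (\<forall>i. smooth_on U (pd f i))"
proof
  assume "smooth_on U f"
  then have du: "differentiable_upto k U f" for k
    by (simp add: smooth_on_iff_differentiable_upto)
  show "f differentiable_on U \<and> (\<forall>i. smooth_on U (pd f i))"
    using du[of 0] du[of "Suc _"] by (simp add: differentiable_upto_Suc smooth_on_iff_differentiable_upto)
next
  assume *: "f differentiable_on U \<and> (\<forall>i. smooth_on U (pd f i))"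
  have "differentiable_upto k U f" for k
    using * by (cases k) (simp_all add: differentiable_upto_Suc smooth_on_iff_differentiable_upto)
  then show "smooth_on U f"
    by (simp add: smooth_on_iff_differentiable_upto)
qed

lemma smooth_on_pd: "smooth_on U f \<Longrightarrow> smooth_on U (pd f i)"
  using smooth_on_iff_pd by blast

lemma smooth_on_imp_differentiable_on: "smooth_on U f \<Longrightarrow> f differentiable_on U"
  using smooth_on_iff_pd by blast

lemma smooth_on_imp_differentiable_at: "smooth_on U f \<Longrightarrow> open U \<Longrightarrow> x \<in> U \<Longrightarrow> f differentiable (at x)"
  using smooth_on_imp_differentiable_on differentiable_on_eq_differentiable_at by blast

lemma continuous_on_pd: "smooth_on U f \<Longrightarrow> continuous_on U (pd f i)"
  using smooth_on_pd smooth_on_imp_differentiable_on differentiable_imp_continuous_on by blast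

lemma smooth_on_cong_open:
  assumes "open U" "\<forall>y\<in>U. f y = g y" "smooth_on U f"
  shows "smooth_on U g"
  using assms(3) differentiable_upto_cong_open[OF assms(1,2)]
  unfolding smooth_on_iff_differentiable_upto by blast

lemma smooth_on_const: "smooth_on U (\<lambda>x. c)"
  by (simp add: smooth_on_iff_differentiable_upto differentiable_upto_const)

lemma smooth_on_add: "open U \<Longrightarrow> smooth_on U f \<Longrightarrow> smooth_on U g \<Longrightarrow> smooth_on U (\<lambda>x. f x + g x)"
  by (simp add: smooth_on_iff_differentiable_upto differentiable_upto_add)

lemma smooth_on_sum:
  assumes "open U" "finite S" "\<forall>k\<in>S. smooth_on U (f k)"
  shows "smooth_on U (\<lambda>x. \<Sum>k\<in>S. f k x)"
  using assms(2,3)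
proof (induction S rule: finite_induct)
  case empty
  then show ?case
    by (simp add: smooth_on_const)
next
  case (insert k S)
  then show ?case
    by (simp add: smooth_on_add[OF assms(1)])
qed

lemma smooth_on_mult:
  fixes f g :: "real^'n \<Rightarrow> real"
  shows "open U \<Longrightarrow> smooth_on U f \<Longrightarrow> smooth_on U g \<Longrightarrow> smooth_on U (\<lambda>x. f x * g x)"
  by (simp add: smooth_on_iff_differentiable_upto differentiable_upto_mult)

lemma smooth_on_vec_nth:
  fixes F :: "real^'n \<Rightarrow> real^'m"
  shows "open U \<Longrightarrow> smooth_on U F \<Longrightarrow> smooth_on U (\<lambda>x. F x $ j)"
  by (simp add: smooth_on_iff_differentiable_upto differentiable_upto_vec_nth)

section \<open>Symmetry of second partial derivatives\<close>

lemma has_real_derivative_pd_line: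
  fixes f :: "real^'n \<Rightarrow> real"
  assumes "f differentiable (at (p + s *\<^sub>R axis i 1))"
  shows "((\<lambda>s. f (p + s *\<^sub>R axis i 1)) has_real_derivative pd f i (p + s *\<^sub>R axis i 1)) (at s)"
proof -
  let ?F = "frechet_derivative f (at (p + s *\<^sub>R axis i 1))"
  have "((\<lambda>s. p + s *\<^sub>R axis i 1) has_derivative (\<lambda>t. t *\<^sub>R axis i 1)) (at s)"
    by (auto intro!: derivative_eq_intros)
  from has_derivative_compose[OF this assms[unfolded frechet_derivative_works]]
  have "((\<lambda>s. f (p + s *\<^sub>R axis i 1)) has_derivative (\<lambda>t. ?F (t *\<^sub>R axis i 1))) (at s)" .
  moreover have "?F (t *\<^sub>R axis i 1) = pd f i (p + s *\<^sub>R axis i 1) * t" for t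
    using linear_frechet_derivative[OF assms] by (simp add: linear_scale pd_def)
  ultimately show ?thesis
    by (auto intro: has_derivative_imp_has_field_derivative)
qed

lemma mixed_difference_mvt:
  fixes f :: "real^'n \<Rightarrow> real"
  assumes diff: "\<forall>y\<in>ball x \<rho>. f differentiable (at y)"
    and h: "0 < h" "2 * h < \<rho>" and b: "norm b = 1"
  obtains \<xi> where "0 < \<xi>" "\<xi> < h"
    "f (x + h *\<^sub>R b + h *\<^sub>R axis i 1) - f (x + h *\<^sub>R axis i 1) - f (x + h *\<^sub>R b) + f x
       = h * (pd f i (x + h *\<^sub>R b + \<xi> *\<^sub>R axis i 1) - pd f i (x + \<xi> *\<^sub>R axis i 1))"
proof -
  let ?a = "axis i 1 :: real^'n"
  have in_ball: "x + c *\<^sub>R b + s *\<^sub>R ?a \<in> ball x \<rho>" if "0 \<le> s" "s \<le> h" "0 \<le> c" "c \<le> h" for s c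
  proof -
    have "norm (c *\<^sub>R b + s *\<^sub>R ?a) \<le> c + s"
      using norm_triangle_ineq[of "c *\<^sub>R b" "s *\<^sub>R ?a"] that b by (simp add: norm_axis_1)
    moreover have "dist x (x + c *\<^sub>R b + s *\<^sub>R ?a) = norm (c *\<^sub>R b + s *\<^sub>R ?a)"
    proof -
      have "x - (x + c *\<^sub>R b + s *\<^sub>R ?a) = - (c *\<^sub>R b + s *\<^sub>R ?a)"
        by (simp add: algebra_simps)
      then show ?thesis
        by (simp only: dist_norm norm_minus_cancel)
    qed
    ultimately show ?thesis
      using that h by simp
  qed
  define \<phi> where "\<phi> s = f (x + h *\<^sub>R b + s *\<^sub>R ?a) - f (x + s *\<^sub>R ?a)" for s
  have deriv: "(\<phi> has_real_derivative pd f i (x + h *\<^sub>R b + s *\<^sub>R ?a) - pd f i (x + s *\<^sub>R ?a)) (at s)"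
    if "0 \<le> s" "s \<le> h" for s
    unfolding \<phi>_def using in_ball[OF that, of h] in_ball[OF that, of 0] h diff
    by (intro DERIV_diff has_real_derivative_pd_line) auto
  then obtain \<xi> where "0 < \<xi>" "\<xi> < h"
    "\<phi> h - \<phi> 0 = (h - 0) * (pd f i (x + h *\<^sub>R b + \<xi> *\<^sub>R ?a) - pd f i (x + \<xi> *\<^sub>R ?a))"
    using MVT2[OF h(1), of \<phi> "\<lambda>s. pd f i (x + h *\<^sub>R b + s *\<^sub>R ?a) - pd f i (x + s *\<^sub>R ?a)"] deriv
    by auto
  then show ?thesis
    using that by (simp add: \<phi>_def algebra_simps)
qed

lemma mixed_difference_approx:
  fixes f :: "real^'n \<Rightarrow> real"
  assumes diff: "\<forall>y\<in>ball x \<rho>. f differentiable (at y)"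
    and approx: "\<forall>y. norm (y - x) < \<delta> \<longrightarrow> \<bar>pd f i y - pd f i x - L (y - x)\<bar> \<le> \<epsilon> * norm (y - x)"
    and L: "linear L" and \<epsilon>: "0 \<le> \<epsilon>" and h: "0 < h" "2 * h < \<delta>" "2 * h < \<rho>" and b: "norm b = 1"
  shows "\<bar>(f (x + h *\<^sub>R b + h *\<^sub>R axis i 1) - f (x + h *\<^sub>R axis i 1) - f (x + h *\<^sub>R b) + f x) - h\<^sup>2 * L b\<bar>
           \<le> 3 * \<epsilon> * h\<^sup>2"
proof -
  let ?a = "axis i 1 :: real^'n"
  obtain \<xi> where \<xi>: "0 < \<xi>" "\<xi> < h"
    and mvt: "f (x + h *\<^sub>R b + h *\<^sub>R ?a) - f (x + h *\<^sub>R ?a) - f (x + h *\<^sub>R b) + f x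
       = h * (pd f i (x + h *\<^sub>R b + \<xi> *\<^sub>R ?a) - pd f i (x + \<xi> *\<^sub>R ?a))"
    using mixed_difference_mvt[OF diff h(1,3) b] by blast
  define y1 where "y1 = x + h *\<^sub>R b + \<xi> *\<^sub>R ?a"
  define y2 where "y2 = x + \<xi> *\<^sub>R ?a"
  define e1 where "e1 = pd f i y1 - pd f i x - L (y1 - x)"
  define e2 where "e2 = pd f i y2 - pd f i x - L (y2 - x)"
  have "norm (y1 - x) \<le> 2 * h"
    using norm_triangle_ineq[of "h *\<^sub>R b" "\<xi> *\<^sub>R ?a"] b \<xi> by (simp add: y1_def norm_axis_1)
  then have e1: "\<bar>e1\<bar> \<le> \<epsilon> * (2 * h)"
    using approx h \<epsilon> unfolding e1_def by (meson le_less_trans mult_left_mono order_trans)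
  have "norm (y2 - x) \<le> h"
    using \<xi> by (simp add: y2_def norm_axis_1)
  then have e2: "\<bar>e2\<bar> \<le> \<epsilon> * h"
    using approx h \<epsilon> unfolding e2_def by (smt (verit) mult_left_mono)
  have "y1 - x = h *\<^sub>R b + (y2 - x)"
    by (simp add: y1_def y2_def algebra_simps)
  then have "L (y1 - x) = h * L b + L (y2 - x)"
    by (simp only: linear_add[OF L] linear_scale[OF L] real_scaleR_def)
  then have "f (x + h *\<^sub>R b + h *\<^sub>R ?a) - f (x + h *\<^sub>R ?a) - f (x + h *\<^sub>R b) + f x - h\<^sup>2 * L b = h * (e1 - e2)"
    unfolding mvt y1_def[symmetric] y2_def[symmetric] e1_def e2_def by (simp add: power2_eq_square algebra_simps)
  also have "\<bar>h * (e1 - e2)\<bar> \<le> h * (\<epsilon> * (2 * h) + \<epsilon> * h)"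
    using e1 e2 h(1) by (simp add: abs_mult)
  finally show ?thesis
    by (simp add: power2_eq_square algebra_simps)
qed

lemma mixed_partials_estimate:
  fixes f :: "real^'n \<Rightarrow> real"
  assumes diff: "\<forall>y\<in>ball x \<rho>. f differentiable (at y)" and \<rho>: "\<rho> > 0"
    and Li: "(pd f i has_derivative Li) (at x)" and Lj: "(pd f j has_derivative Lj) (at x)"
    and \<epsilon>: "\<epsilon> > 0"
  shows "\<bar>Li (axis j 1) - Lj (axis i 1)\<bar> \<le> 6 * \<epsilon>"
proof -
  let ?a = "axis i 1 :: real^'n" and ?b = "axis j 1 :: real^'n"
  obtain \<delta>i where \<delta>i: "\<delta>i > 0"
      "\<forall>y. norm (y - x) < \<delta>i \<longrightarrow> \<bar>pd f i y - pd f i x - Li (y - x)\<bar> \<le> \<epsilon> * norm (y - x)"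
    using Li \<epsilon> unfolding has_derivative_at_alt by (metis real_norm_def)
  obtain \<delta>j where \<delta>j: "\<delta>j > 0"
      "\<forall>y. norm (y - x) < \<delta>j \<longrightarrow> \<bar>pd f j y - pd f j x - Lj (y - x)\<bar> \<le> \<epsilon> * norm (y - x)"
    using Lj \<epsilon> unfolding has_derivative_at_alt by (metis real_norm_def)
  define h where "h = min (min \<delta>i \<delta>j) \<rho> / 4"
  have h: "0 < h" "2 * h < \<delta>i" "2 * h < \<delta>j" "2 * h < \<rho>"
    using \<delta>i \<delta>j \<rho> by (auto simp: h_def)
  \<comment> \<open>The mixed second difference D is symmetric in the two directions; approximating it
      through pd f i and through pd f j gives h^2 Li b and h^2 Lj a up to O(\<epsilon> h^2).\<close>
  define D where "D = f (x + h *\<^sub>R ?b + h *\<^sub>R ?a) - f (x + h *\<^sub>R ?a) - f (x + h *\<^sub>R ?b) + f x"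
  have "\<bar>D - h\<^sup>2 * Li ?b\<bar> \<le> 3 * \<epsilon> * h\<^sup>2"
    unfolding D_def
    by (rule mixed_difference_approx[OF diff \<delta>i(2) has_derivative_linear[OF Li] _ h(1,2,4)])
      (use \<epsilon> in \<open>auto simp: norm_axis_1\<close>)
  moreover have "\<bar>D - h\<^sup>2 * Lj ?a\<bar> \<le> 3 * \<epsilon> * h\<^sup>2"
  proof -
    have steps_commute: "x + h *\<^sub>R ?b + h *\<^sub>R ?a = x + h *\<^sub>R ?a + h *\<^sub>R ?b"
      by (simp add: algebra_simps)
    have "D = f (x + h *\<^sub>R ?a + h *\<^sub>R ?b) - f (x + h *\<^sub>R ?b) - f (x + h *\<^sub>R ?a) + f x"
      unfolding D_def steps_commute by simp
    also have "\<bar>\<dots> - h\<^sup>2 * Lj ?a\<bar> \<le> 3 * \<epsilon> * h\<^sup>2"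
      by (rule mixed_difference_approx[OF diff \<delta>j(2) has_derivative_linear[OF Lj] _ h(1,3,4)])
        (use \<epsilon> in \<open>auto simp: norm_axis_1\<close>)
    finally show ?thesis .
  qed
  ultimately have "\<bar>h\<^sup>2 * Li ?b - h\<^sup>2 * Lj ?a\<bar> \<le> 2 * (3 * \<epsilon> * h\<^sup>2)"
    unfolding abs_le_iff by linarith
  moreover have "\<bar>h\<^sup>2 * Li ?b - h\<^sup>2 * Lj ?a\<bar> = h\<^sup>2 * \<bar>Li ?b - Lj ?a\<bar>"
    by (simp add: abs_mult flip: right_diff_distrib)
  ultimately have "h\<^sup>2 * \<bar>Li ?b - Lj ?a\<bar> \<le> h\<^sup>2 * (6 * \<epsilon>)"
    by (simp add: mult_ac)
  then show ?thesis
    using h(1) by simp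
qed

lemma pd_pd_commute:
  fixes f :: "real^'n \<Rightarrow> real"
  assumes U: "open U" "x \<in> U" and diff: "\<forall>y\<in>U. f differentiable (at y)"
    and diff_i: "pd f i differentiable (at x)" and diff_j: "pd f j differentiable (at x)"
  shows "pd (pd f i) j x = pd (pd f j) i x"
proof -
  obtain Li where Li: "(pd f i has_derivative Li) (at x)"
    using diff_i differentiable_def by blast
  obtain Lj where Lj: "(pd f j has_derivative Lj) (at x)"
    using diff_j differentiable_def by blast
  obtain \<rho> where \<rho>: "\<rho> > 0" "ball x \<rho> \<subseteq> U"
    using U open_contains_ball by blast
  have diff_ball: "\<forall>y\<in>ball x \<rho>. f differentiable (at y)"
    using diff \<rho> by auto
  have "Li (axis j 1) = Lj (axis i 1)"
  proof (rule ccontr)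
    assume "Li (axis j 1) \<noteq> Lj (axis i 1)"
    then show False
      using mixed_partials_estimate[OF diff_ball \<rho>(1) Li Lj, of "\<bar>Li (axis j 1) - Lj (axis i 1)\<bar> / 12"] by simp
  qed
  then show ?thesis
    using pd_eq_derivative_axis[OF Li, of j] pd_eq_derivative_axis[OF Lj, of i] by simp
qed

lemma pd_pd_commute_smooth:
  fixes F :: "real^'n \<Rightarrow> real^'m"
  assumes U: "open U" "x \<in> U" and F: "smooth_on U F"
  shows "pd (pd F i) j x = pd (pd F j) i x"
proof -
  have "pd (pd F i) j x $ k = pd (pd F j) i x $ k" for k
  proof -
    let ?Fk = "\<lambda>y. F y $ k"
    have Fk: "smooth_on U ?Fk"
      by (rule smooth_on_vec_nth[OF U(1) F])
    have pd_pd_nth: "pd (pd F a) b x $ k = pd (pd ?Fk a) b x" for a b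
    proof -
      have "pd (pd F a) b x $ k = pd (\<lambda>y. pd F a y $ k) b x"
        using pd_vec_nth[OF smooth_on_imp_differentiable_at[OF smooth_on_pd[OF F] U]] by simp
      also have "\<dots> = pd (pd ?Fk a) b x"
        using F U by (intro pd_cong_open) (auto simp: pd_vec_nth smooth_on_imp_differentiable_at)
      finally show ?thesis .
    qed
    have "pd (pd ?Fk i) j x = pd (pd ?Fk j) i x"
      using Fk U by (intro pd_pd_commute) (auto intro: smooth_on_imp_differentiable_at smooth_on_pd)
    then show ?thesis
      by (simp add: pd_pd_nth)
  qed
  then show ?thesis
    by (simp add: vec_eq_iff)
qed

section \<open>The Poincare lemma on convex sets\<close>

lemma has_derivative_radial_integrand:
  fixes G :: "real^'n \<Rightarrow> real^'n"
  assumes "G differentiable (at (c + t *\<^sub>R (y - c)))"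
  shows "((\<lambda>y. G (c + t *\<^sub>R (y - c)) \<bullet> (y - c)) has_derivative
           (\<lambda>h. \<Sum>j\<in>UNIV. (t * (pd G j (c + t *\<^sub>R (y - c)) \<bullet> (y - c)) + G (c + t *\<^sub>R (y - c)) $ j) * h $ j))
         (at y within X)"
proof -
  let ?z = "c + t *\<^sub>R (y - c)"
  have "((\<lambda>y. c + t *\<^sub>R (y - c)) has_derivative (\<lambda>h. t *\<^sub>R h)) (at y within X)"
    by (auto intro!: derivative_eq_intros)
  from has_derivative_compose[OF this has_derivative_pd_expansion[OF assms]]
  have "((\<lambda>y. G (c + t *\<^sub>R (y - c))) has_derivative (\<lambda>h. \<Sum>j\<in>UNIV. (t *\<^sub>R h) $ j *\<^sub>R pd G j ?z)) (at y within X)" .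
  from has_derivative_inner[OF this has_derivative_diff[OF has_derivative_ident has_derivative_const]]
  have "((\<lambda>y. G (c + t *\<^sub>R (y - c)) \<bullet> (y - c)) has_derivative
          (\<lambda>h. G ?z \<bullet> (h - 0) + (\<Sum>j\<in>UNIV. (t *\<^sub>R h) $ j *\<^sub>R pd G j ?z) \<bullet> (y - c))) (at y within X)" .
  moreover have "g \<bullet> (h - 0) + (\<Sum>j\<in>UNIV. (t *\<^sub>R h) $ j *\<^sub>R w j) \<bullet> v
      = (\<Sum>j\<in>UNIV. (t * (w j \<bullet> v) + g $ j) * h $ j)" for g h v and w :: "'n \<Rightarrow> real^'n"
    by (simp add: inner_sum_left inner_vec_def[of g h] sum.distrib algebra_simps)
  ultimately show ?thesis
    by simp
qed

lemma has_integral_radial_integrand: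
  fixes G :: "real^'n \<Rightarrow> real^'n"
  assumes diff: "\<forall>t\<in>{0..1}. G differentiable (at (c + t *\<^sub>R (y - c)))"
    and closed: "\<forall>t\<in>{0..1}. \<forall>i j. pd G j (c + t *\<^sub>R (y - c)) $ i = pd G i (c + t *\<^sub>R (y - c)) $ j"
  shows "((\<lambda>t. t * (pd G j (c + t *\<^sub>R (y - c)) \<bullet> (y - c)) + G (c + t *\<^sub>R (y - c)) $ j) has_integral G y $ j) {0..1}"
proof -
  \<comment> \<open>By the symmetry of the Jacobian the integrand is the t-derivative of t G(c + t(y - c))_j.\<close>
  have "((\<lambda>t. t * G (c + t *\<^sub>R (y - c)) $ j) has_vector_derivative
          t * (pd G j (c + t *\<^sub>R (y - c)) \<bullet> (y - c)) + G (c + t *\<^sub>R (y - c)) $ j) (at t within {0..1})"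
    if t: "t \<in> {0..1}" for t
  proof -
    let ?z = "c + t *\<^sub>R (y - c)"
    have "((\<lambda>t. c + t *\<^sub>R (y - c)) has_derivative (\<lambda>s. s *\<^sub>R (y - c))) (at t within {0..1})"
      by (auto intro!: derivative_eq_intros)
    from has_derivative_vec_nth[OF has_derivative_compose[OF this has_derivative_pd_expansion[OF diff[rule_format, OF t]]]]
    have "((\<lambda>t. G (c + t *\<^sub>R (y - c)) $ j) has_derivative
            (\<lambda>s. (\<Sum>i\<in>UNIV. (s *\<^sub>R (y - c)) $ i *\<^sub>R pd G i ?z) $ j)) (at t within {0..1})" .
    from has_derivative_mult[OF has_derivative_ident this]
    have "((\<lambda>t. t * G (c + t *\<^sub>R (y - c)) $ j) has_derivative
            (\<lambda>s. t * (\<Sum>i\<in>UNIV. (s *\<^sub>R (y - c)) $ i *\<^sub>R pd G i ?z) $ j + s * G ?z $ j)) (at t within {0..1})" .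
    moreover have "t * (\<Sum>i\<in>UNIV. (s *\<^sub>R (y - c)) $ i *\<^sub>R pd G i ?z) $ j + s * G ?z $ j
        = s * (t * (pd G j ?z \<bullet> (y - c)) + G ?z $ j)" for s
      using closed t by (simp add: inner_vec_def sum_distrib_left algebra_simps)
    ultimately show ?thesis
      unfolding has_vector_derivative_def by (simp add: mult.commute)
  qed
  from fundamental_theorem_of_calculus[OF _ this]
  show ?thesis
    by simp
qed

lemma has_derivative_radial_integral:
  fixes G :: "real^'n \<Rightarrow> real^'n"
  assumes S: "open S" "convex S" "c \<in> S" "y \<in> S"
    and diff: "\<forall>y\<in>S. G differentiable (at y)"
    and cont: "\<forall>j. continuous_on S (pd G j)"
  shows "((\<lambda>y. integral {0..1} (\<lambda>t. G (c + t *\<^sub>R (y - c)) \<bullet> (y - c))) has_derivative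
          (\<lambda>h. \<Sum>j\<in>UNIV. integral {0..1} (\<lambda>t. t * (pd G j (c + t *\<^sub>R (y - c)) \<bullet> (y - c)) + G (c + t *\<^sub>R (y - c)) $ j)
                 * h $ j)) (at y)"
proof -
  define z where "z y t = c + t *\<^sub>R (y - c)" for y :: "real^'n" and t :: real
  have zS: "z y t \<in> S" if "y \<in> S" "t \<in> {0..1}" for y t
  proof -
    have "z y t = (1 - t) *\<^sub>R c + t *\<^sub>R y"
      by (simp add: z_def algebra_simps)
    then show ?thesis
      using S(2,3) that unfolding convex_alt by simp
  qed
  define coef where "coef j y t = t * (pd G j (z y t) \<bullet> (y - c)) + G (z y t) $ j" for j y t
  define K where "K j = Blinfun (\<lambda>h::real^'n. h $ j)" for j
  have K: "blinfun_apply (K j) h = h $ j" for j h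
    unfolding K_def by (simp add: bounded_linear_Blinfun_apply bounded_linear_vec_nth)
  define DP where "DP y t = (\<Sum>j\<in>UNIV. coef j y t *\<^sub>R K j)" for y t
  have DP_apply: "blinfun_apply (DP y t) h = (\<Sum>j\<in>UNIV. coef j y t * h $ j)" for y t h
    unfolding DP_def by (simp add: blinfun.sum_left blinfun.scaleR_left K)
  have cont_z: "continuous_on X (\<lambda>p. z (fst p) (snd p))" for X
    unfolding z_def by (intro continuous_intros)
  have z_img: "(\<lambda>p. z (fst p) (snd p)) ` (S \<times> {0..1}) \<subseteq> S"
    using zS by auto
  have cont_G: "continuous_on S G"
    using diff by (meson continuous_at_imp_continuous_on differentiable_imp_continuous_within)
  have cont_coef: "continuous_on (S \<times> {0..1}) (\<lambda>p. coef j (fst p) (snd p))" for j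
    unfolding coef_def
    by (intro continuous_intros continuous_on_compose2[OF cont[rule_format] cont_z z_img]
        continuous_on_compose2[OF cont_G cont_z z_img])
  have cont_slice: "continuous_on {0..1} (\<lambda>t. g (y, t))" if "continuous_on (S \<times> {0..1}) g" "y \<in> S" for g y
    by (rule continuous_on_compose2[OF that(1)]) (use that(2) in \<open>auto intro!: continuous_intros\<close>)
  have deriv: "((\<lambda>y. integral (cbox 0 1) (\<lambda>t. G (z y t) \<bullet> (y - c))) has_derivative
          blinfun_apply (integral (cbox 0 1) (DP y))) (at y within S)"
  proof (rule leibniz_rule[OF _ _ _ S(4,2)])
    show "((\<lambda>y. G (z y t) \<bullet> (y - c)) has_derivative blinfun_apply (DP y t)) (at y within S)"
      if "y \<in> S" "t \<in> cbox 0 1" for y t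
      using has_derivative_radial_integrand[of G c t y S] diff zS that
      unfolding DP_apply[abs_def] coef_def z_def by (simp add: cbox_interval)
    show "(\<lambda>t. G (z y t) \<bullet> (y - c)) integrable_on cbox 0 1" if "y \<in> S" for y
      using cont_slice[OF continuous_on_compose2[OF cont_G cont_z z_img] that]
      by (auto simp: cbox_interval intro!: integrable_continuous_interval continuous_intros)
    show "continuous_on (S \<times> cbox 0 1) (\<lambda>(y, t). DP y t)"
      unfolding DP_def cbox_interval case_prod_beta' by (intro continuous_intros cont_coef)
  qed
  have "blinfun_apply (integral (cbox 0 1) (DP y)) = (\<lambda>h. \<Sum>j\<in>UNIV. integral {0..1} (coef j y) * h $ j)"
  proof
    fix h
    have int: "coef j y integrable_on {0..1}" for j
      using cont_slice[OF cont_coef S(4)] by (simp add: integrable_continuous_interval)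
    then have "DP y integrable_on cbox 0 1"
      unfolding DP_def cbox_interval by (intro integrable_sum integrable_on_scaleR_left) auto
    then have "blinfun_apply (integral (cbox 0 1) (DP y)) h = integral {0..1} (\<lambda>t. \<Sum>j\<in>UNIV. coef j y t * h $ j)"
      by (simp add: blinfun_apply_integral DP_apply cbox_interval)
    also have "\<dots> = (\<Sum>j\<in>UNIV. integral {0..1} (\<lambda>t. coef j y t * h $ j))"
      using int by (intro integral_sum integrable_on_mult_left) auto
    finally show "blinfun_apply (integral (cbox 0 1) (DP y)) h = (\<Sum>j\<in>UNIV. integral {0..1} (coef j y) * h $ j)"
      by simp
  qed
  with deriv show ?thesis
    using at_within_open[OF S(4,1)] by (simp add: cbox_interval z_def coef_def[abs_def])
qed

lemma convex_closed_field_has_potential: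
  fixes G :: "real^'n \<Rightarrow> real^'n"
  assumes S: "open S" "convex S"
    and diff: "\<forall>y\<in>S. G differentiable (at y)"
    and cont: "\<forall>j. continuous_on S (pd G j)"
    and closed: "\<forall>y\<in>S. \<forall>i j. pd G j y $ i = pd G i y $ j"
  shows "\<exists>P. \<forall>y\<in>S. (P has_derivative (\<lambda>h. G y \<bullet> h)) (at y)"
proof (cases "S = {}")
  case False
  then obtain c where c: "c \<in> S"
    by blast
  have "((\<lambda>y. integral {0..1} (\<lambda>t. G (c + t *\<^sub>R (y - c)) \<bullet> (y - c))) has_derivative (\<lambda>h. G y \<bullet> h)) (at y)"
    if y: "y \<in> S" for y
  proof -
    have segment: "c + t *\<^sub>R (y - c) \<in> S" if "t \<in> {0..1}" for t
    proof -
      have "c + t *\<^sub>R (y - c) = (1 - t) *\<^sub>R c + t *\<^sub>R y"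
        by (simp add: algebra_simps)
      then show ?thesis
        using S(2) c y that unfolding convex_alt by simp
    qed
    have "integral {0..1} (\<lambda>t. t * (pd G j (c + t *\<^sub>R (y - c)) \<bullet> (y - c)) + G (c + t *\<^sub>R (y - c)) $ j) = G y $ j"
      for j
      using segment diff closed by (intro integral_unique has_integral_radial_integrand) auto
    then show ?thesis
      using has_derivative_radial_integral[OF S c y diff cont] by (simp add: inner_vec_def mult.commute)
  qed
  then show ?thesis
    by blast
qed simp

section \<open>Integrating locally exact forms along paths\<close>

lemma locally_constant_on_interval:
  fixes f :: "real \<Rightarrow> real"
  assumes "\<forall>t\<in>{a..b}. \<exists>e>0. \<forall>s\<in>{a..b}. \<bar>s - t\<bar> < e \<longrightarrow> f s = f t"
    and "x \<in> {a..b}" "y \<in> {a..b}"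
  shows "f x = f y"
proof -
  have "\<exists>c. \<forall>x\<in>{a..b}. f x = c"
  proof (rule has_derivative_zero_constant)
    fix t assume t: "t \<in> {a..b}"
    obtain e where e: "e > 0" "\<forall>s\<in>{a..b}. \<bar>s - t\<bar> < e \<longrightarrow> f s = f t"
      using assms(1) t by blast
    have "((\<lambda>x. f t) has_derivative (\<lambda>h. 0)) (at t within {a..b})"
      by simp
    then show "(f has_derivative (\<lambda>h. 0)) (at t within {a..b})"
      by (rule has_derivative_transform_within[OF _ e(1) t]) (use e(2) in \<open>auto simp: dist_real_def\<close>)
  qed auto
  then show ?thesis
    using assms(2,3) by auto
qed

definition primitive_on :: "('a::real_normed_vector \<Rightarrow> 'a \<Rightarrow> real) \<Rightarrow> 'a set \<Rightarrow> ('a \<Rightarrow> real) \<Rightarrow> bool" where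
  "primitive_on D B P \<longleftrightarrow> open B \<and> convex B \<and> (\<forall>y\<in>B. (P has_derivative D y) (at y))"

lemma primitive_on_diff_constant:
  assumes "primitive_on D B1 P1" "primitive_on D B2 P2"
  shows "\<exists>c. \<forall>y\<in>B1 \<inter> B2. P1 y - P2 y = c"
proof (rule has_derivative_zero_constant)
  show "convex (B1 \<inter> B2)"
    using assms by (simp add: primitive_on_def convex_Int)
  fix x assume x: "x \<in> B1 \<inter> B2"
  have "((\<lambda>y. P1 y - P2 y) has_derivative (\<lambda>h. D x h - D x h)) (at x)"
    using assms x unfolding primitive_on_def by (intro has_derivative_diff) auto
  then show "((\<lambda>y. P1 y - P2 y) has_derivative (\<lambda>h. 0)) (at x within B1 \<inter> B2)"
    by (simp add: has_derivative_at_withinI)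
qed

lemma primitive_on_agree:
  assumes "primitive_on D B1 P1" "primitive_on D B2 P2" "y0 \<in> B1" "y0 \<in> B2" "y \<in> B1" "y \<in> B2" "P1 y0 = P2 y0"
  shows "P1 y = P2 y"
proof -
  obtain c where c: "\<forall>y\<in>B1 \<inter> B2. P1 y - P2 y = c"
    using primitive_on_diff_constant[OF assms(1,2)] by blast
  have "P1 y - P2 y = c" "P1 y0 - P2 y0 = c"
    using c assms(3-6) by auto
  then show ?thesis
    using assms(7) by simp
qed

lemma primitive_on_add_constant: "primitive_on D B P \<Longrightarrow> primitive_on D B (\<lambda>y. P y + c)"
  unfolding primitive_on_def by (auto intro: has_derivative_add_const)

lemma primitive_on_subset: "primitive_on D B P \<Longrightarrow> B' \<subseteq> B \<Longrightarrow> open B' \<Longrightarrow> convex B' \<Longrightarrow> primitive_on D B' P"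
  unfolding primitive_on_def by auto

text \<open>
  primitive_along D a b \<gamma> \<theta> says that \<theta> continues local primitives of D along \<gamma> on [a, b].
  The difference \<theta> 1 - \<theta> 0 then plays the role of the line integral of D along \<gamma>, obtained
  without any integration; form_integral is unspecified for paths admitting no such \<theta>.
\<close>

definition primitive_along :: "('a::real_normed_vector \<Rightarrow> 'a \<Rightarrow> real) \<Rightarrow> real \<Rightarrow> real \<Rightarrow> (real \<Rightarrow> 'a) \<Rightarrow> (real \<Rightarrow> real) \<Rightarrow> bool" where
  "primitive_along D a b \<gamma> \<theta> \<longleftrightarrow> (\<forall>t\<in>{a..b}. \<exists>B P e. primitive_on D B P \<and> 0 < e \<and>
      (\<forall>s\<in>{a..b}. \<bar>s - t\<bar> < e \<longrightarrow> \<gamma> s \<in> B \<and> \<theta> s = P (\<gamma> s)))"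

lemma primitive_along_unique:
  assumes \<theta>1: "primitive_along D a b \<gamma> \<theta>1" and \<theta>2: "primitive_along D a b \<gamma> \<theta>2" and s: "s \<in> {a..b}"
  shows "\<theta>1 s - \<theta>2 s = \<theta>1 a - \<theta>2 a"
proof (rule locally_constant_on_interval[of a b "\<lambda>x. \<theta>1 x - \<theta>2 x"])
  show "\<forall>t\<in>{a..b}. \<exists>e>0. \<forall>s\<in>{a..b}. \<bar>s - t\<bar> < e \<longrightarrow> \<theta>1 s - \<theta>2 s = \<theta>1 t - \<theta>2 t"
  proof
    fix t assume t: "t \<in> {a..b}"
    obtain B1 P1 e1 where 1: "primitive_on D B1 P1" "0 < e1"
        "\<forall>s\<in>{a..b}. \<bar>s - t\<bar> < e1 \<longrightarrow> \<gamma> s \<in> B1 \<and> \<theta>1 s = P1 (\<gamma> s)"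
      using \<theta>1 t unfolding primitive_along_def by blast
    obtain B2 P2 e2 where 2: "primitive_on D B2 P2" "0 < e2"
        "\<forall>s\<in>{a..b}. \<bar>s - t\<bar> < e2 \<longrightarrow> \<gamma> s \<in> B2 \<and> \<theta>2 s = P2 (\<gamma> s)"
      using \<theta>2 t unfolding primitive_along_def by blast
    obtain c where c: "\<forall>y\<in>B1 \<inter> B2. P1 y - P2 y = c"
      using primitive_on_diff_constant[OF 1(1) 2(1)] by blast
    have "\<theta>1 s - \<theta>2 s = c" if "s \<in> {a..b}" "\<bar>s - t\<bar> < min e1 e2" for s
      using 1(3) 2(3) c that by auto
    then show "\<exists>e>0. \<forall>s\<in>{a..b}. \<bar>s - t\<bar> < e \<longrightarrow> \<theta>1 s - \<theta>2 s = \<theta>1 t - \<theta>2 t"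
      using 1(2) 2(2) t by (intro exI[of _ "min e1 e2"]) auto
  qed
qed (use s in auto)

lemma primitive_along_single:
  assumes "primitive_on D B P" "\<forall>s\<in>{a..b}. \<gamma> s \<in> B"
  shows "primitive_along D a b \<gamma> (\<lambda>s. P (\<gamma> s) + c)"
  unfolding primitive_along_def
  using assms primitive_on_add_constant[OF assms(1), of c] by (metis zero_less_one)

lemma primitive_along_cong:
  assumes "primitive_along D a b \<gamma> \<theta>" "\<forall>s\<in>{a..b}. \<gamma> s = \<gamma>' s \<and> \<theta> s = \<theta>' s"
  shows "primitive_along D a b \<gamma>' \<theta>'"
  using assms unfolding primitive_along_def by metis

lemma primitive_along_affine:
  assumes l: "primitive_along D a b \<gamma> \<theta>" and k: "0 < k" and ab: "a = k * a' + d" "b = k * b' + d"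
  shows "primitive_along D a' b' (\<lambda>s. \<gamma> (k * s + d)) (\<lambda>s. \<theta> (k * s + d))"
  unfolding primitive_along_def
proof
  fix t assume t: "t \<in> {a'..b'}"
  then have "k * t + d \<in> {a..b}"
    using ab k by (auto intro: mult_left_mono add_right_mono)
  then obtain B P e where BP: "primitive_on D B P" "0 < e" "\<forall>s\<in>{a..b}. \<bar>s - (k*t+d)\<bar> < e \<longrightarrow> \<gamma> s \<in> B \<and> \<theta> s = P (\<gamma> s)"
    using l unfolding primitive_along_def by blast
  show "\<exists>B P e. primitive_on D B P \<and> 0 < e \<and> (\<forall>s\<in>{a'..b'}. \<bar>s - t\<bar> < e \<longrightarrow> \<gamma> (k * s + d) \<in> B \<and> \<theta> (k * s + d) = P (\<gamma> (k * s + d)))"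
  proof (intro exI conjI ballI impI)
    show "primitive_on D B P" "0 < e / k" using BP k by auto
    fix s assume s: "s \<in> {a'..b'}" "\<bar>s - t\<bar> < e / k"
    have "k * s + d \<in> {a..b}"
      using ab k s by (auto intro: mult_left_mono add_right_mono)
    moreover have "\<bar>(k * s + d) - (k*t+d)\<bar> < e"
    proof -
      have "\<bar>(k * s + d) - (k*t+d)\<bar> = k * \<bar>s - t\<bar>"
        using k by (simp add: right_diff_distrib[symmetric] abs_mult)
      also have "\<dots> < e"
        using s k by (simp add: pos_less_divide_eq mult.commute)
      finally show ?thesis .
    qed
    ultimately show "\<gamma> (k * s + d) \<in> B" "\<theta> (k * s + d) = P (\<gamma> (k * s + d))"
      using BP by auto
  qed
qed

lemma primitive_along_join:
  assumes l1: "primitive_along D a b \<gamma> \<theta>1" and l2: "primitive_along D b c \<gamma> \<theta>2" and eq: "\<theta>1 b = \<theta>2 b"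
    and ab: "a \<le> b" and bc: "b \<le> c" and cont: "continuous_on {a..c} \<gamma>"
  shows "primitive_along D a c \<gamma> (\<lambda>s. if s \<le> b then \<theta>1 s else \<theta>2 s)"
  unfolding primitive_along_def
proof
  fix t assume t: "t \<in> {a..c}"
  consider "t < b" | "t = b" | "t > b" by linarith
  then show "\<exists>B P e. primitive_on D B P \<and> 0 < e \<and> (\<forall>s\<in>{a..c}. \<bar>s - t\<bar> < e \<longrightarrow> \<gamma> s \<in> B \<and> (if s \<le> b then \<theta>1 s else \<theta>2 s) = P (\<gamma> s))"
  proof cases
    case 1
    then obtain B P e where BP: "primitive_on D B P" "0 < e" "\<forall>s\<in>{a..b}. \<bar>s - t\<bar> < e \<longrightarrow> \<gamma> s \<in> B \<and> \<theta>1 s = P (\<gamma> s)"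
      using l1 t unfolding primitive_along_def by fastforce
    show ?thesis
      using BP 1 t by (intro exI[of _ B] exI[of _ P] exI[of _ "min e (b - t)"]) auto
  next
    case 3
    then obtain B P e where BP: "primitive_on D B P" "0 < e" "\<forall>s\<in>{b..c}. \<bar>s - t\<bar> < e \<longrightarrow> \<gamma> s \<in> B \<and> \<theta>2 s = P (\<gamma> s)"
      using l2 t unfolding primitive_along_def by fastforce
    show ?thesis
      using BP 3 t by (intro exI[of _ B] exI[of _ P] exI[of _ "min e (t - b)"]) auto
  next
    case 2
    obtain B1 P1 e1 where 1: "primitive_on D B1 P1" "0 < e1" "\<forall>s\<in>{a..b}. \<bar>s - b\<bar> < e1 \<longrightarrow> \<gamma> s \<in> B1 \<and> \<theta>1 s = P1 (\<gamma> s)"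
      using l1 ab unfolding primitive_along_def by fastforce
    obtain B2 P2 e2 where 2: "primitive_on D B2 P2" "0 < e2" "\<forall>s\<in>{b..c}. \<bar>s - b\<bar> < e2 \<longrightarrow> \<gamma> s \<in> B2 \<and> \<theta>2 s = P2 (\<gamma> s)"
      using l2 bc unfolding primitive_along_def by fastforce
    have gb: "\<gamma> b \<in> B1" "\<gamma> b \<in> B2" "\<theta>1 b = P1 (\<gamma> b)" "\<theta>2 b = P2 (\<gamma> b)"
      using 1 2 ab bc by auto
    have opn: "open (B1 \<inter> B2)" "convex (B1 \<inter> B2)"
      using 1 2 by (auto simp: primitive_on_def convex_Int)
    have "b \<in> {a..c}" using ab bc by auto
    obtain r where rr: "r > 0" "ball (\<gamma> b) r \<subseteq> B1 \<inter> B2"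
      using gb opn open_contains_ball by blast
    obtain d where d: "0 < d" "\<forall>s\<in>{a..c}. dist s b < d \<longrightarrow> dist (\<gamma> s) (\<gamma> b) < r"
      using cont \<open>b \<in> {a..c}\<close> rr(1) unfolding continuous_on_iff by blast
    show ?thesis
    proof (intro exI conjI ballI impI)
      show "primitive_on D (B1 \<inter> B2) P1"
        using primitive_on_subset[OF 1(1) Int_lower1 opn] .
      show "0 < min d (min e1 e2)" using d 1 2 by simp
      fix s assume s: "s \<in> {a..c}" "\<bar>s - t\<bar> < min d (min e1 e2)"
      have "dist (\<gamma> s) (\<gamma> b) < r"
        using d(2) s \<open>t = b\<close> by (auto simp: dist_real_def)
      then have sB: "\<gamma> s \<in> B1 \<inter> B2"
        using rr(2) by (auto simp: dist_commute)
      then show "\<gamma> s \<in> B1 \<inter> B2" .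
      show "(if s \<le> b then \<theta>1 s else \<theta>2 s) = P1 (\<gamma> s)"
      proof (cases "s \<le> b")
        case True
        then show ?thesis
          using 1(3) s \<open>t = b\<close> by auto
      next
        case False
        then have "\<theta>2 s = P2 (\<gamma> s)"
          using 2(3) s \<open>t = b\<close> by auto
        moreover have "P2 (\<gamma> s) = P1 (\<gamma> s)"
          by (rule primitive_on_agree[OF 2(1) 1(1)]) (use gb sB eq in auto)
        ultimately show ?thesis
          using False by simp
      qed
    qed
  qed
qed

lemma primitive_along_exists:
  assumes cont: "continuous_on {0..1} \<gamma>" and img: "\<gamma> ` {0..1} \<subseteq> U"
    and loc: "\<forall>x\<in>U. \<exists>B P. x \<in> B \<and> primitive_on D B P"
  shows "\<exists>\<theta>. primitive_along D 0 1 \<gamma> \<theta>"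
proof -
  define A where "A = {\<tau>\<in>{0..1::real}. \<exists>\<theta>. primitive_along D 0 \<tau> \<gamma> \<theta>}"
  have "\<gamma> 0 \<in> U" using img by auto
  then obtain B0 P0 where "\<gamma> 0 \<in> B0" "primitive_on D B0 P0"
    using loc by blast
  then have "primitive_along D 0 0 \<gamma> (\<lambda>s. P0 (\<gamma> s) + 0)"
    by (intro primitive_along_single) auto
  then have A0: "0 \<in> A" unfolding A_def by auto
  have bdd: "bdd_above A"
    unfolding A_def by (rule bdd_aboveI[of _ 1]) auto
  define \<tau> where "\<tau> = Sup A"
  have \<tau>0: "0 \<le> \<tau>"
    unfolding \<tau>_def using A0 bdd by (rule cSup_upper)
  have \<tau>1: "\<tau> \<le> 1" unfolding \<tau>_def
  proof (rule cSup_least)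
    show "A \<noteq> {}" using A0 by blast
  qed (auto simp: A_def)
  have "\<gamma> \<tau> \<in> U" using img \<tau>0 \<tau>1 by auto
  then obtain B P where BP: "\<gamma> \<tau> \<in> B" "primitive_on D B P"
    using loc by blast
  obtain r where r: "r > 0" "ball (\<gamma> \<tau>) r \<subseteq> B"
    using BP open_contains_ball unfolding primitive_on_def by blast
  obtain d where d: "0 < d" "\<forall>s\<in>{0..1}. dist s \<tau> < d \<longrightarrow> dist (\<gamma> s) (\<gamma> \<tau>) < r"
  proof -
    have "\<tau> \<in> {0..1}" using \<tau>0 \<tau>1 by auto
    then show ?thesis
      using cont r(1) that unfolding continuous_on_iff by blast
  qed
  obtain \<tau>' where \<tau>': "\<tau>' \<in> A" "\<tau> - d < \<tau>'"
    using less_cSupE[of "\<tau> - d" A] A0 d(1) unfolding \<tau>_def by auto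
  have \<tau>'le: "\<tau>' \<le> \<tau>"
    unfolding \<tau>_def using \<tau>'(1) bdd by (rule cSup_upper)
  obtain \<theta> where \<theta>: "primitive_along D 0 \<tau>' \<gamma> \<theta>" and \<tau>'01: "0 \<le> \<tau>'"
    using \<tau>'(1) unfolding A_def by auto
  define \<tau>'' where "\<tau>'' = min 1 (\<tau> + d/2)"
  have inB: "\<forall>s\<in>{\<tau>'..\<tau>''}. \<gamma> s \<in> B"
  proof
    fix s assume s: "s \<in> {\<tau>'..\<tau>''}"
    then have "s \<in> {0..1}" "dist s \<tau> < d"
      using \<tau>'01 \<tau>'(2) \<tau>'le d(1) by (auto simp: \<tau>''_def dist_real_def)
    then have "dist (\<gamma> s) (\<gamma> \<tau>) < r"
      using d(2) by blast
    then show "\<gamma> s \<in> B"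
      using r(2) by (auto simp: dist_commute)
  qed
  have l2: "primitive_along D \<tau>' \<tau>'' \<gamma> (\<lambda>s. P (\<gamma> s) + (\<theta> \<tau>' - P (\<gamma> \<tau>')))"
    by (rule primitive_along_single[OF BP(2) inB])
  have le: "\<tau>' \<le> \<tau>''"
    using \<tau>'le \<tau>1 d(1) by (simp add: \<tau>''_def)
  have "primitive_along D 0 \<tau>'' \<gamma> (\<lambda>s. if s \<le> \<tau>' then \<theta> s else P (\<gamma> s) + (\<theta> \<tau>' - P (\<gamma> \<tau>')))"
    by (rule primitive_along_join[OF \<theta> l2]) (use \<tau>'01 le in \<open>auto simp: \<tau>''_def intro: continuous_on_subset[OF cont]\<close>)
  then have "\<tau>'' \<in> A"
    unfolding A_def using \<tau>'01 le by (auto simp: \<tau>''_def)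
  then have "\<tau>'' \<le> \<tau>"
    unfolding \<tau>_def using bdd by (rule cSup_upper)
  then have "\<tau>'' = 1"
    using d(1) by (auto simp: \<tau>''_def min_def split: if_splits)
  with \<open>\<tau>'' \<in> A\<close> show ?thesis
    unfolding A_def by auto
qed

definition form_integral :: "('a::real_normed_vector \<Rightarrow> 'a \<Rightarrow> real) \<Rightarrow> (real \<Rightarrow> 'a) \<Rightarrow> real" where
  "form_integral D \<gamma> = (let \<theta> = (SOME \<theta>. primitive_along D 0 1 \<gamma> \<theta>) in \<theta> 1 - \<theta> 0)"

lemma form_integral_eq:
  assumes "primitive_along D 0 1 \<gamma> \<theta>"
  shows "form_integral D \<gamma> = \<theta> 1 - \<theta> 0"
proof -
  have l: "primitive_along D 0 1 \<gamma> (SOME \<theta>. primitive_along D 0 1 \<gamma> \<theta>)"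
    using assms by (rule someI[where P="primitive_along D 0 1 \<gamma>"])
  show ?thesis
    using primitive_along_unique[OF l assms, of 1] unfolding form_integral_def Let_def by simp
qed

lemma dist_Pair_less:
  fixes a b c d :: real
  shows "\<bar>a - c\<bar> < e/2 \<Longrightarrow> \<bar>b - d\<bar> < e/2 \<Longrightarrow> dist (a, b) (c, d) < e"
  unfolding dist_Pair_Pair dist_real_def
  using sqrt_sum_squares_le_sum_abs[of "a - c" "b - d"] by (simp add: power2_abs)

lemma compact_uniform_cover:
  fixes K :: "'a::metric_space set"
  assumes "compact K" "\<forall>x\<in>K. 0 < r x"
  obtains \<eta> where "\<eta> > 0" "\<forall>x\<in>K. \<exists>c\<in>K. dist x c < r c \<and> \<eta> \<le> r c"
proof -
  have "K \<subseteq> (\<Union>c\<in>K. ball c (r c))"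
    using assms(2) by force
  then obtain T where T: "T \<subseteq> K" "finite T" "K \<subseteq> (\<Union>c\<in>T. ball c (r c))"
    using compactE_image[OF assms(1), of K "\<lambda>c. ball c (r c)"] by blast
  define \<eta> where "\<eta> = Min (insert 1 (r ` T))"
  have "\<eta> > 0"
    using T assms(2) by (auto simp: \<eta>_def)
  moreover have "\<forall>x\<in>K. \<exists>c\<in>K. dist x c < r c \<and> \<eta> \<le> r c"
  proof
    fix x assume "x \<in> K"
    then obtain c where "c \<in> T" "x \<in> ball c (r c)"
      using T(3) by blast
    then show "\<exists>c\<in>K. dist x c < r c \<and> \<eta> \<le> r c"
      using T(1,2) by (intro bexI[of _ c]) (auto simp: \<eta>_def dist_commute)
  qed
  ultimately show ?thesis
    using that by blast
qed

lemma primitive_along_tube: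
  assumes contH: "continuous_on ({0..1}\<times>{0..1}) H"
    and \<theta>0: "primitive_along D 0 1 (\<lambda>t. H (s0, t)) \<theta>0"
    and s0: "s0 \<in> {0..1::real}" and t: "t \<in> {0..1::real}"
  shows "\<exists>B P r. primitive_on D B P \<and> r > 0 \<and>
      (\<forall>t'\<in>{0..1}. \<bar>t' - t\<bar> < r \<longrightarrow> H (s0, t') \<in> B \<and> \<theta>0 t' = P (H (s0, t'))) \<and>
      (\<forall>s\<in>{0..1}. \<forall>t'\<in>{0..1}. \<bar>s - s0\<bar> < r \<and> \<bar>t' - t\<bar> < r \<longrightarrow> H (s, t') \<in> B)"
proof -
  obtain B P e where BP: "primitive_on D B P" "0 < e"
      "\<forall>t'\<in>{0..1}. \<bar>t' - t\<bar> < e \<longrightarrow> H (s0, t') \<in> B \<and> \<theta>0 t' = P (H (s0, t'))"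
    using \<theta>0 t unfolding primitive_along_def by blast
  have "H (s0, t) \<in> B"
    using BP t by auto
  then obtain \<rho> where \<rho>: "\<rho> > 0" "ball (H (s0, t)) \<rho> \<subseteq> B"
    using BP(1) open_contains_ball unfolding primitive_on_def by blast
  have "(s0, t) \<in> {0..1}\<times>{0..1}"
    using s0 t by auto
  then obtain d where d: "d > 0" "\<forall>p\<in>{0..1}\<times>{0..1}. dist p (s0, t) < d \<longrightarrow> dist (H p) (H (s0, t)) < \<rho>"
    using contH \<rho>(1) unfolding continuous_on_iff by blast
  have "H (s, t') \<in> B" if "s \<in> {0..1}" "t' \<in> {0..1}" "\<bar>s - s0\<bar> < d/2" "\<bar>t' - t\<bar> < d/2" for s t'
  proof -
    have "dist (s, t') (s0, t) < d"
      using that by (intro dist_Pair_less) auto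
    then have "dist (H (s, t')) (H (s0, t)) < \<rho>"
      using d(2) that by auto
    then show ?thesis
      using \<rho>(2) by (auto simp: dist_commute)
  qed
  then show ?thesis
    using BP d by (intro exI[of _ B] exI[of _ P] exI[of _ "min e (d/2)"]) auto
qed

lemma primitive_along_uniform_tube:
  assumes contH: "continuous_on ({0..1}\<times>{0..1}) H"
    and \<theta>0: "primitive_along D 0 1 (\<lambda>t. H (s0, t)) \<theta>0"
    and s0: "s0 \<in> {0..1::real}"
  obtains \<eta> B P where "\<eta> > 0" "\<And>t. t \<in> {0..1} \<Longrightarrow> primitive_on D (B t) (P t)"
    "\<And>t t'. t \<in> {0..1} \<Longrightarrow> t' \<in> {0..1} \<Longrightarrow> \<bar>t' - t\<bar> < \<eta> \<Longrightarrow> H (s0, t') \<in> B t \<and> \<theta>0 t' = P t (H (s0, t'))"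
    "\<And>t s t'. t \<in> {0..1} \<Longrightarrow> s \<in> {0..1} \<Longrightarrow> t' \<in> {0..1} \<Longrightarrow> \<bar>s - s0\<bar> < \<eta> \<Longrightarrow> \<bar>t' - t\<bar> < \<eta>
      \<Longrightarrow> H (s, t') \<in> B t"
proof -
  obtain B P r where tube: "\<And>t. t \<in> {0..1} \<Longrightarrow> primitive_on D (B t) (P t) \<and> r t > 0 \<and>
      (\<forall>t'\<in>{0..1}. \<bar>t' - t\<bar> < r t \<longrightarrow> H (s0, t') \<in> B t \<and> \<theta>0 t' = P t (H (s0, t'))) \<and>
      (\<forall>s\<in>{0..1}. \<forall>t'\<in>{0..1}. \<bar>s - s0\<bar> < r t \<and> \<bar>t' - t\<bar> < r t \<longrightarrow> H (s, t') \<in> B t)"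
    using primitive_along_tube[OF contH \<theta>0 s0] by metis
  obtain \<eta> where \<eta>: "\<eta> > 0" "\<forall>t\<in>{0..1}. \<exists>c\<in>{0..1}. dist t c < r c / 2 \<and> \<eta> \<le> r c / 2"
    using compact_uniform_cover[of "{0..1::real}" "\<lambda>t. r t / 2"] tube by auto
  then have "\<forall>t\<in>{0..1}. \<exists>c. c \<in> {0..1} \<and> \<bar>t - c\<bar> < r c / 2 \<and> \<eta> \<le> r c / 2"
    unfolding dist_real_def by blast
  from bchoice[OF this] obtain c where
    c: "\<And>t. t \<in> {0..1} \<Longrightarrow> c t \<in> {0..1} \<and> \<bar>t - c t\<bar> < r (c t) / 2 \<and> \<eta> \<le> r (c t) / 2"
    by blast
  \<comment> \<open>Recentring every tube at t by the one at c t gives the common radius \<eta>.\<close>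
  show ?thesis
  proof (rule that[of \<eta> "\<lambda>t. B (c t)" "\<lambda>t. P (c t)"])
    show "\<eta> > 0"
      by (rule \<eta>(1))
    show "primitive_on D (B (c t)) (P (c t))" if "t \<in> {0..1}" for t
      using tube[OF conjunct1[OF c[OF that]]] by blast
    show "H (s0, t') \<in> B (c t) \<and> \<theta>0 t' = P (c t) (H (s0, t'))"
      if "t \<in> {0..1}" "t' \<in> {0..1}" "\<bar>t' - t\<bar> < \<eta>" for t t'
    proof -
      have "\<bar>t' - c t\<bar> < r (c t)"
        using c[OF that(1)] that(3) by linarith
      then show ?thesis
        using tube[OF conjunct1[OF c[OF that(1)]]] that(2) by blast
    qed
    show "H (s, t') \<in> B (c t)"
      if "t \<in> {0..1}" "s \<in> {0..1}" "t' \<in> {0..1}" "\<bar>s - s0\<bar> < \<eta>" "\<bar>t' - t\<bar> < \<eta>" for t s t'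
    proof -
      have "\<bar>t' - c t\<bar> < r (c t)" "\<bar>s - s0\<bar> < r (c t)"
        using c[OF that(1)] that(4,5) by linarith+
      then show ?thesis
        using tube[OF conjunct1[OF c[OF that(1)]]] that(2,3) by blast
    qed
  qed
qed

lemma form_integral_homotopy_local:
  assumes contH: "continuous_on ({0..1}\<times>{0..1}) H" and imgH: "H ` ({0..1}\<times>{0..1}) \<subseteq> U"
    and loc: "\<forall>x\<in>U. \<exists>B P. x \<in> B \<and> primitive_on D B P"
    and ends: "\<forall>s\<in>{0..1}. H (s, 0) = z \<and> H (s, 1) = w"
    and s0: "s0 \<in> {0..1::real}"
  shows "\<exists>\<eta>>0. \<forall>s\<in>{0..1}. \<bar>s - s0\<bar> < \<eta> \<longrightarrow> form_integral D (\<lambda>t. H (s, t)) = form_integral D (\<lambda>t. H (s0, t))"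
proof -
  have "continuous_on {0..1} (\<lambda>t. H (s0, t))"
    by (rule continuous_on_compose2[OF contH]) (use s0 in \<open>auto intro!: continuous_intros\<close>)
  moreover have "(\<lambda>t. H (s0, t)) ` {0..1} \<subseteq> U"
    using imgH s0 by auto
  ultimately obtain \<theta>0 where \<theta>0: "primitive_along D 0 1 (\<lambda>t. H (s0, t)) \<theta>0"
    using primitive_along_exists[OF _ _ loc] by blast
  obtain \<eta> B P where \<eta>: "\<eta> > 0" and prim: "\<And>t. t \<in> {0..1} \<Longrightarrow> primitive_on D (B t) (P t)"
    and lift0: "\<And>t t'. t \<in> {0..1} \<Longrightarrow> t' \<in> {0..1} \<Longrightarrow> \<bar>t' - t\<bar> < \<eta> \<Longrightarrow> H (s0, t') \<in> B t \<and> \<theta>0 t' = P t (H (s0, t'))"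
    and tube: "\<And>t s t'. t \<in> {0..1} \<Longrightarrow> s \<in> {0..1} \<Longrightarrow> t' \<in> {0..1} \<Longrightarrow> \<bar>s - s0\<bar> < \<eta> \<Longrightarrow> \<bar>t' - t\<bar> < \<eta>
      \<Longrightarrow> H (s, t') \<in> B t"
    using primitive_along_uniform_tube[OF contH \<theta>0 s0] by blast
  have "form_integral D (\<lambda>t. H (s, t)) = form_integral D (\<lambda>t. H (s0, t))"
    if s: "s \<in> {0..1}" "\<bar>s - s0\<bar> < \<eta>" for s
  proof -
    \<comment> \<open>Two of the primitives agree along H(s0, -) where both apply, hence also along H(s, -).\<close>
    have agree: "P t (H (s, t')) = P t' (H (s, t'))"
      if t: "t \<in> {0..1}" "t' \<in> {0..1}" "\<bar>t' - t\<bar> < \<eta>" for t t'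
    proof (rule primitive_on_agree[of D "B t" "P t" "B t'" "P t'" "H (s0, t')"])
      show "primitive_on D (B t) (P t)" "primitive_on D (B t') (P t')"
        using prim t by auto
      have "\<bar>t' - t'\<bar> < \<eta>"
        using \<eta> by simp
      then show "H (s0, t') \<in> B t" "H (s0, t') \<in> B t'" "P t (H (s0, t')) = P t' (H (s0, t'))"
          "H (s, t') \<in> B t" "H (s, t') \<in> B t'"
        using lift0[OF t] lift0[OF t(2) t(2)] tube[OF t(1) s(1) t(2) s(2) t(3)] tube[OF t(2) s(1) t(2) s(2)]
        by auto
    qed
    have "primitive_along D 0 1 (\<lambda>t. H (s, t)) (\<lambda>t. P t (H (s, t)))"
      unfolding primitive_along_def
    proof (intro ballI)
      fix t :: real assume t: "t \<in> {0..1}"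
      show "\<exists>B' P' e. primitive_on D B' P' \<and> 0 < e \<and>
          (\<forall>t'\<in>{0..1}. \<bar>t' - t\<bar> < e \<longrightarrow> H (s, t') \<in> B' \<and> P t' (H (s, t')) = P' (H (s, t')))"
        using \<eta> prim[OF t] tube[OF t s(1) _ s(2)] agree[OF t] by (intro exI[of _ "B t"] exI[of _ "P t"] exI[of _ \<eta>]) auto
    qed
    moreover have "P t (H (s, t)) = \<theta>0 t" if "t = 0 \<or> t = 1" for t
      using that ends s(1) s0 \<eta> lift0[of t t] by auto
    ultimately show ?thesis
      using form_integral_eq[OF \<theta>0] by (simp add: form_integral_eq)
  qed
  then show ?thesis
    using \<eta> by blast
qed

lemma form_integral_homotopy:
  assumes contH: "continuous_on ({0..1}\<times>{0..1}) H" and imgH: "H ` ({0..1}\<times>{0..1}) \<subseteq> U"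
    and loc: "\<forall>x\<in>U. \<exists>B P. x \<in> B \<and> primitive_on D B P"
    and ends: "\<forall>s\<in>{0..1}. H (s, 0) = z \<and> H (s, 1) = w"
  shows "form_integral D (\<lambda>t. H (0::real, t)) = form_integral D (\<lambda>t. H (1, t))"
  using locally_constant_on_interval[of 0 1 "\<lambda>s. form_integral D (\<lambda>t. H (s, t))" 0 1]
    form_integral_homotopy_local[OF contH imgH loc ends] by (simp add: eq_commute)

lemma form_integral_cong:
  assumes "\<forall>t\<in>{0..1}. \<gamma> t = \<gamma>' t"
  shows "form_integral D \<gamma> = form_integral D \<gamma>'"
proof -
  have "primitive_along D 0 1 \<gamma> = primitive_along D 0 1 \<gamma>'"
    using assms unfolding primitive_along_def by (intro ext) (metis (no_types, lifting))
  then show ?thesis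
    unfolding form_integral_def by simp
qed

lemma form_integral_join_segment:
  assumes pg: "path g" "path_image g \<subseteq> U" and loc: "\<forall>x\<in>U. \<exists>B P. x \<in> B \<and> primitive_on D B P"
    and BP: "primitive_on D B P" "pathfinish g \<in> B" "y \<in> B"
  shows "form_integral D (g +++ linepath (pathfinish g) y) = form_integral D g + P y - P (pathfinish g)"
proof -
  define x where "x = pathfinish g"
  define q where "q = g +++ linepath x y"
  obtain \<theta> where \<theta>: "primitive_along D 0 1 g \<theta>"
    using primitive_along_exists[of g U D] pg loc by (auto simp: path_def path_image_def)
  have l1: "primitive_along D 0 (1/2) q (\<lambda>s. \<theta> (2 * s + 0))"
  proof (rule primitive_along_cong[OF primitive_along_affine[OF \<theta>, of 2 0 0 "1/2"]])
    show "\<forall>s\<in>{0..1/2}. g (2 * s + 0) = q s \<and> \<theta> (2 * s + 0) = \<theta> (2 * s + 0)"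
      by (auto simp: q_def joinpaths_def)
  qed auto
  have seg: "closed_segment x y \<subseteq> B"
    using BP by (intro closed_segment_subset) (auto simp: primitive_on_def x_def)
  have qB: "\<forall>s\<in>{1/2..1}. q s \<in> B"
  proof
    fix s :: real assume s: "s \<in> {1/2..1}"
    have "q s = linepath x y (2 * s - 1)"
    proof (cases "s = 1/2")
      case True
      show ?thesis
        unfolding True q_def joinpaths_def by (simp add: x_def pathfinish_def linepath_def)
    next
      case False
      then show ?thesis
        using s by (simp add: q_def joinpaths_def)
    qed
    also have "\<dots> \<in> closed_segment x y"
      using s by (intro linepath_in_path) auto
    finally show "q s \<in> B"
      using seg by blast
  qed
  define c where "c = \<theta> 1 - P x"
  have l2: "primitive_along D (1/2) 1 q (\<lambda>s. P (q s) + c)"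
    by (rule primitive_along_single[OF BP(1) qB])
  have q12: "q (1/2) = x"
    by (simp add: q_def joinpaths_def x_def pathfinish_def)
  have cq: "continuous_on {0..1} q" using pg BP unfolding q_def x_def
    by (metis path_def path_join_imp path_linepath pathstart_linepath)
  have lq: "primitive_along D 0 1 q (\<lambda>s. if s \<le> 1/2 then \<theta> (2 * s + 0) else P (q s) + c)"
    by (rule primitive_along_join[OF l1 l2]) (use q12 cq in \<open>auto simp: c_def\<close>)
  have "form_integral D q = P (q 1) + c - \<theta> 0"
    using form_integral_eq[OF lq] by simp
  moreover have "q 1 = y"
    by (simp add: q_def joinpaths_def linepath_def)
  moreover have "form_integral D g = \<theta> 1 - \<theta> 0"
    using form_integral_eq[OF \<theta>] .
  ultimately show ?thesis
    by (simp add: q_def x_def c_def)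
qed

lemma form_integral_homotopic_paths:
  assumes "homotopic_paths U p q" and loc: "\<forall>x\<in>U. \<exists>B P. x \<in> B \<and> primitive_on D B P"
  shows "form_integral D p = form_integral D q"
proof -
  obtain H where H: "continuous_on ({0..1} \<times> {0..1}) H" "H \<in> ({0..1} \<times> {0..1}) \<rightarrow> U"
    "\<forall>x\<in>{0..1}. H (0, x) = p x" "\<forall>x\<in>{0..1}. H (1, x) = q x"
    "\<forall>t\<in>{0..1::real}. pathstart (H \<circ> Pair t) = pathstart p \<and> pathfinish (H \<circ> Pair t) = pathfinish p"
    using assms(1) unfolding homotopic_paths by blast
  have "form_integral D (\<lambda>t. H (0, t)) = form_integral D (\<lambda>t. H (1, t))"
  proof (rule form_integral_homotopy[OF H(1) _ loc])
    show "H ` ({0..1} \<times> {0..1}) \<subseteq> U"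
      using H(2) by auto
    show "\<forall>s\<in>{0..1}. H (s, 0) = pathstart p \<and> H (s, 1) = pathfinish p"
      using H(5) by (auto simp: pathstart_def pathfinish_def)
  qed
  moreover have "form_integral D (\<lambda>t. H (0, t)) = form_integral D p"
    by (rule form_integral_cong) (use H(3) in auto)
  moreover have "form_integral D (\<lambda>t. H (1, t)) = form_integral D q"
    by (rule form_integral_cong) (use H(4) in auto)
  ultimately show ?thesis
    by simp
qed

lemma simply_connected_global_primitive:
  fixes U :: "'a::real_normed_vector set"
  assumes opn: "open U" and sc: "simply_connected U"
    and loc: "\<forall>x\<in>U. \<exists>B P. x \<in> B \<and> B \<subseteq> U \<and> primitive_on D B P"
  shows "\<exists>\<phi>. \<forall>x\<in>U. (\<phi> has_derivative D x) (at x)"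
proof (cases "U = {}")
  case True
  then show ?thesis
    by auto
next
  case False
  then obtain z where z: "z \<in> U" by blast
  have loc': "\<forall>x\<in>U. \<exists>B P. x \<in> B \<and> primitive_on D B P"
    using loc by blast
  have pc: "path_connected U" and hom: "\<And>p q. path p \<Longrightarrow> path_image p \<subseteq> U \<Longrightarrow> path q \<Longrightarrow> path_image q \<subseteq> U \<Longrightarrow>
      pathstart q = pathstart p \<Longrightarrow> pathfinish q = pathfinish p \<Longrightarrow> homotopic_paths U p q"
    using sc unfolding simply_connected_eq_homotopic_paths by auto
  define pth where "pth x = (SOME \<gamma>. path \<gamma> \<and> path_image \<gamma> \<subseteq> U \<and> pathstart \<gamma> = z \<and> pathfinish \<gamma> = x)" for x
  have pth: "path (pth x) \<and> path_image (pth x) \<subseteq> U \<and> pathstart (pth x) = z \<and> pathfinish (pth x) = x" if "x \<in> U" for x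
  proof -
    have "\<exists>\<gamma>. path \<gamma> \<and> path_image \<gamma> \<subseteq> U \<and> pathstart \<gamma> = z \<and> pathfinish \<gamma> = x"
      using pc z that unfolding path_connected_def by blast
    then show ?thesis
      unfolding pth_def by (rule someI_ex)
  qed
  define \<phi> where "\<phi> x = form_integral D (pth x)" for x
  show ?thesis
  proof (intro exI ballI)
    fix x assume x: "x \<in> U"
    obtain B P where BP: "x \<in> B" "B \<subseteq> U" "primitive_on D B P"
      using loc x by blast
    have eq: "\<phi> y = \<phi> x + P y - P x" if y: "y \<in> B" for y
    proof -
      have px: "path (pth x)" "path_image (pth x) \<subseteq> U" "pathstart (pth x) = z" "pathfinish (pth x) = x"
        using pth[OF x] by auto
      have yU: "y \<in> U" using y BP by auto
      have seg: "closed_segment x y \<subseteq> U"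
        using BP y by (meson closed_segment_subset primitive_on_def subset_trans)
      define q where "q = pth x +++ linepath x y"
      have q: "path q" "path_image q \<subseteq> U" "pathstart q = z" "pathfinish q = y"
        using px seg by (auto simp: q_def path_image_join)
      have "homotopic_paths U (pth y) q"
        using pth[OF yU] q by (intro hom) auto
      then have "\<phi> y = form_integral D q"
        unfolding \<phi>_def using form_integral_homotopic_paths loc' by blast
      also have "\<dots> = form_integral D (pth x) + P y - P x"
        using form_integral_join_segment[OF px(1,2) loc' BP(3), of y] px(4) BP(1) y by (simp add: q_def)
      finally show ?thesis
        by (simp add: \<phi>_def)
    qed
    have "((\<lambda>y. \<phi> x + P y - P x) has_derivative D x) (at x)"
    proof -
      have "(P has_derivative D x) (at x)"
        using BP unfolding primitive_on_def by auto
      then have "((\<lambda>y. \<phi> x + P y - P x) has_derivative (\<lambda>h. 0 + D x h - 0)) (at x)"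
        by (intro has_derivative_diff has_derivative_add has_derivative_const)
      then show ?thesis
        by simp
    qed
    moreover have "open B"
      using BP(3) unfolding primitive_on_def by blast
    moreover have eq': "\<And>y. y \<in> B \<Longrightarrow> \<phi> x + P y - P x = \<phi> y"
      using eq by (rule sym)
    ultimately show "(\<phi> has_derivative D x) (at x)"
      by (rule has_derivative_transform_within_open[OF _ _ BP(1)])
  qed
qed

lemma simply_connected_closed_field_has_potential:
  fixes G :: "real^'n \<Rightarrow> real^'n"
  assumes U: "open U" "simply_connected U"
    and diff: "\<forall>y\<in>U. G differentiable (at y)"
    and cont: "\<forall>j. continuous_on U (pd G j)"
    and closed: "\<forall>y\<in>U. \<forall>i j. pd G j y $ i = pd G i y $ j"
  shows "\<exists>\<phi>. \<forall>x\<in>U. (\<phi> has_derivative (\<lambda>h. G x \<bullet> h)) (at x)"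
proof (rule simply_connected_global_primitive[OF U])
  show "\<forall>x\<in>U. \<exists>B P. x \<in> B \<and> B \<subseteq> U \<and> primitive_on (\<lambda>x h. G x \<bullet> h) B P"
  proof
    fix x assume "x \<in> U"
    then obtain r where r: "r > 0" "ball x r \<subseteq> U"
      using U(1) open_contains_ball by blast
    have "\<exists>P. \<forall>y\<in>ball x r. (P has_derivative (\<lambda>h. G y \<bullet> h)) (at y)"
    proof (rule convex_closed_field_has_potential)
      show "\<forall>j. continuous_on (ball x r) (pd G j)"
        using cont r(2) continuous_on_subset by blast
    qed (use diff closed r(2) in auto)
    then obtain P where "\<forall>y\<in>ball x r. (P has_derivative (\<lambda>h. G y \<bullet> h)) (at y)"
      by blast
    then show "\<exists>B P. x \<in> B \<and> B \<subseteq> U \<and> primitive_on (\<lambda>x h. G x \<bullet> h) B P"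
      using r by (intro exI[of _ "ball x r"] exI[of _ P]) (auto simp: primitive_on_def)
  qed
qed

lemma closed_form_has_smooth_potential:
  fixes F :: "'n \<Rightarrow> real^'n \<Rightarrow> real"
  assumes U: "open U" "simply_connected U"
    and smooth: "\<forall>j. smooth_on U (F j)"
    and closed: "\<forall>u\<in>U. \<forall>i j. pd (F j) i u = pd (F i) j u"
  shows "\<exists>\<phi>. smooth_on U \<phi> \<and> (\<forall>u\<in>U. \<forall>j. pd \<phi> j u = F j u)"
proof -
  define G where "G u = (\<chi> j. F j u)" for u
  have diff_F: "F j differentiable (at u)" if "u \<in> U" for j u
    using smooth_on_imp_differentiable_at[OF smooth[rule_format] U(1) that] .
  have pd_G: "pd G k u = (\<chi> j. pd (F j) k u)" if "u \<in> U" for k u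
    unfolding G_def using pd_vec_lambda(2)[OF diff_F[OF that]] .
  have "\<forall>u\<in>U. G differentiable (at u)"
    unfolding G_def using pd_vec_lambda(1) diff_F by blast
  moreover have "continuous_on U (pd G k)" for k
  proof -
    have "continuous_on U (\<lambda>u. \<chi> j. pd (F j) k u)"
      using smooth by (intro continuous_on_vec_lambda continuous_on_pd) blast
    then show ?thesis
      using pd_G continuous_on_cong by (metis (no_types, lifting))
  qed
  moreover have "\<forall>u\<in>U. \<forall>i j. pd G j u $ i = pd G i u $ j"
    using closed pd_G by simp
  ultimately obtain \<phi> where \<phi>: "\<forall>u\<in>U. (\<phi> has_derivative (\<lambda>h. G u \<bullet> h)) (at u)"
    using simply_connected_closed_field_has_potential[OF U] by blast
  have pd_\<phi>: "\<forall>u\<in>U. \<forall>j. pd \<phi> j u = F j u"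
  proof (intro ballI allI)
    fix u j assume "u \<in> U"
    then show "pd \<phi> j u = F j u"
      using pd_eq_derivative_axis[OF \<phi>[rule_format]] by (simp add: inner_axis G_def)
  qed
  have "smooth_on U \<phi>"
    unfolding smooth_on_iff_pd[of U \<phi>]
  proof
    show "\<phi> differentiable_on U"
      using \<phi> U(1) differentiable_def differentiable_on_eq_differentiable_at by blast
    show "\<forall>j. smooth_on U (pd \<phi> j)"
      using smooth pd_\<phi> smooth_on_cong_open[OF U(1)] by (metis (no_types, lifting))
  qed
  with pd_\<phi> show ?thesis
    by blast
qed

lemma codazzi_tensor_is_hessian:
  fixes \<omega> :: "'n \<Rightarrow> 'n \<Rightarrow> real^'n \<Rightarrow> real"
  assumes U: "open U" "simply_connected U"
    and smooth: "\<forall>i j. smooth_on U (\<omega> i j)"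
    and sym: "\<forall>u\<in>U. \<forall>i j. \<omega> i j u = \<omega> j i u"
    and codazzi: "\<forall>u\<in>U. \<forall>i j k. pd (\<omega> i j) k u = pd (\<omega> k j) i u"
  shows "\<exists>\<psi>. smooth_on U \<psi> \<and> (\<forall>u\<in>U. \<forall>i j. pd (pd \<psi> j) i u = \<omega> i j u)"
proof -
  have "\<exists>g. smooth_on U g \<and> (\<forall>u\<in>U. \<forall>i. pd g i u = \<omega> i j u)" for j
    using closed_form_has_smooth_potential[OF U, of "\<lambda>i. \<omega> i j"] smooth codazzi by simp
  then obtain g where g: "\<And>j. smooth_on U (g j)" "\<And>j. \<forall>u\<in>U. \<forall>i. pd (g j) i u = \<omega> i j u"
    by metis
  have "\<forall>u\<in>U. \<forall>i j. pd (g j) i u = pd (g i) j u"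
    using g(2) sym by simp
  then obtain \<psi> where \<psi>: "smooth_on U \<psi>" "\<forall>u\<in>U. \<forall>j. pd \<psi> j u = g j u"
    using closed_form_has_smooth_potential[OF U, of g] g(1) by blast
  have "pd (pd \<psi> j) i u = \<omega> i j u" if "u \<in> U" for i j u
  proof -
    have "pd (pd \<psi> j) i u = pd (g j) i u"
      using \<psi>(2) by (intro pd_cong_open[OF U(1) that]) blast
    then show ?thesis
      using g(2) that by simp
  qed
  with \<psi>(1) show ?thesis
    by blast
qed

section \<open>Flat torsionless submanifolds\<close>

lemma pinner_commute: "pinner eps x y = pinner eps y x"
  unfolding pinner_def by (simp add: mult_ac)

lemma pinner_sum_left: "pinner eps (\<Sum>a\<in>S. A a *\<^sub>R x a) y = (\<Sum>a\<in>S. A a * pinner eps (x a) y)"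
  unfolding pinner_def by (simp add: sum_distrib_left sum_distrib_right algebra_simps sum.swap[of _ S])

lemma pd_pinner:
  fixes a b :: "real^'n \<Rightarrow> real^'m"
  assumes "a differentiable (at u)" "b differentiable (at u)"
  shows "pd (\<lambda>v. pinner eps (a v) (b v)) i u = pinner eps (pd a i u) (b u) + pinner eps (a u) (pd b i u)"
proof -
  let ?A = "frechet_derivative a (at u)" and ?B = "frechet_derivative b (at u)"
  have A: "(a has_derivative ?A) (at u)" and B: "(b has_derivative ?B) (at u)"
    using assms frechet_derivative_works by blast+
  have "((\<lambda>v. \<Sum>k\<in>UNIV. eps k * a v $ k * b v $ k) has_derivative
      (\<lambda>h. \<Sum>k\<in>UNIV. eps k * a u $ k * ?B h $ k + eps k * ?A h $ k * b u $ k)) (at u)"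
    by (intro has_derivative_sum has_derivative_mult has_derivative_mult_right has_derivative_vec_nth A B)
  then have "((\<lambda>v. pinner eps (a v) (b v)) has_derivative
      (\<lambda>h. pinner eps (?A h) (b u) + pinner eps (a u) (?B h))) (at u)"
    unfolding pinner_def by (simp add: sum.distrib algebra_simps)
  from pd_eq_derivative_axis[OF this, of i] show ?thesis
    by (simp add: pd_def)
qed

lemma smooth_on_pinner:
  fixes a b :: "real^'n \<Rightarrow> real^'m"
  assumes "open U" "smooth_on U a" "smooth_on U b"
  shows "smooth_on U (\<lambda>v. pinner eps (a v) (b v))"
proof -
  have "smooth_on U (\<lambda>v. eps k * a v $ k * b v $ k)" for k
    using smooth_on_mult[OF assms(1) smooth_on_mult[OF assms(1) smooth_on_const smooth_on_vec_nth[OF assms(1,2)]]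
        smooth_on_vec_nth[OF assms(1,3)]] .
  then show ?thesis
    unfolding pinner_def by (intro smooth_on_sum[OF assms(1)]) auto
qed

lemma constant_metric_second_derivative_normal:
  fixes r :: "real^'n \<Rightarrow> real^'m"
  assumes U: "open U" "u \<in> U" and r: "smooth_on U r"
    and metric: "\<forall>v\<in>U. \<forall>i j. pinner eps (pd r i v) (pd r j v) = g i j"
  shows "pinner eps (pd r a u) (pd (pd r b) c u) = 0"
proof -
  define T where "T a b c = pinner eps (pd r a u) (pd (pd r b) c u)" for a b c
  have diff: "pd r a differentiable (at u)" for a
    using smooth_on_imp_differentiable_at[OF smooth_on_pd[OF r] U] .
  have antisym: "T b a c + T a b c = 0" for a b c
  proof -
    have "pd (\<lambda>v. pinner eps (pd r a v) (pd r b v)) c u = pd (\<lambda>v. g a b) c u"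
      using metric by (intro pd_cong_open[OF U]) auto
    then show ?thesis
      unfolding T_def using pd_pinner[OF diff diff] by (simp add: pd_const pinner_commute)
  qed
  have sym: "T a b c = T a c b" for a b c
    unfolding T_def using pd_pd_commute_smooth[OF U r] by simp
  \<comment> \<open>T is antisymmetric in its first two and symmetric in its last two arguments, hence zero.\<close>
  have "T a b c = 0"
    using antisym[of a b c] antisym[of b c a] antisym[of c a b] sym[of a b c] sym[of b c a] sym[of c a b]
    by linarith
  then show ?thesis
    by (simp add: T_def)
qed

lemma torsionless_second_fundamental_form_codazzi:
  fixes r n :: "real^'n \<Rightarrow> real^'m"
  assumes U: "open U" "u \<in> U" and r: "smooth_on U r" and n: "smooth_on U n"
    and metric: "\<forall>v\<in>U. \<forall>i j. pinner eps (pd r i v) (pd r j v) = g i j"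
    and torsionless: "\<forall>v\<in>U. \<forall>i. \<exists>A :: 'n \<Rightarrow> real. pd n i v = (\<Sum>k\<in>UNIV. A k *\<^sub>R pd r k v)"
  shows "pd (\<lambda>v. pinner eps (n v) (pd (pd r j) i v)) k u = pd (\<lambda>v. pinner eps (n v) (pd (pd r j) k v)) i u"
proof -
  have pd_\<omega>: "pd (\<lambda>v. pinner eps (n v) (pd (pd r j) i v)) k u = pinner eps (n u) (pd (pd (pd r j) i) k u)" for i k
  proof -
    obtain A where A: "pd n k u = (\<Sum>a\<in>UNIV. A a *\<^sub>R pd r a u)"
      using torsionless U(2) by blast
    have "pinner eps (pd n k u) (pd (pd r j) i u) = 0"
      unfolding A pinner_sum_left
      using constant_metric_second_derivative_normal[OF U r metric] by simp
    moreover have "pd (pd r j) i differentiable (at u)"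
      using smooth_on_imp_differentiable_at[OF smooth_on_pd[OF smooth_on_pd[OF r]] U] .
    ultimately show ?thesis
      using pd_pinner[OF smooth_on_imp_differentiable_at[OF n U]] by simp
  qed
  show ?thesis
    unfolding pd_\<omega> using pd_pd_commute_smooth[OF U smooth_on_pd[OF r]] by simp
qed

theorem mainTheorem1:
  fixes eps :: "'m::finite \<Rightarrow> real"
    and U :: "(real^'n::finite) set"
    and r :: "real^'n \<Rightarrow> real^'m"
    and n :: "'l::finite \<Rightarrow> real^'n \<Rightarrow> real^'m"
    and \<eta> :: "real^'n^'n"
    and \<mu> :: "real^'l^'l"
  assumes dim: "CARD('m) = CARD('n) + CARD('l)"
    and signature: "\<forall>k. eps k = 1 \<or> eps k = -1"
    and U_open: "open U"
    and U_sc: "simply_connected U"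
    and r_smooth: "smooth_on U r"
    and flat_coords: "\<forall>u\<in>U. \<forall>i j. pinner eps (pd r i u) (pd r j u) = \<eta> $ i $ j"
    and \<eta>_sym: "transpose \<eta> = \<eta>"
    and \<eta>_nondeg: "invertible \<eta>"
    and n_smooth: "\<forall>\<alpha>. smooth_on U (n \<alpha>)"
    and n_normal: "\<forall>u\<in>U. \<forall>\<alpha> i. pinner eps (n \<alpha> u) (pd r i u) = 0"
    and n_gram: "\<forall>u\<in>U. \<forall>\<alpha> \<beta>. pinner eps (n \<alpha> u) (n \<beta> u) = \<mu> $ \<alpha> $ \<beta>"
    and \<mu>_sym: "transpose \<mu> = \<mu>"
    and \<mu>_nondeg: "invertible \<mu>"
    and torsionless: "\<forall>u\<in>U. \<forall>\<alpha> i. \<exists>A :: 'n \<Rightarrow> real.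
                         pd (n \<alpha>) i u = (\<Sum>k\<in>UNIV. A k *\<^sub>R pd r k u)"
  shows "\<exists>\<psi> :: 'l \<Rightarrow> real^'n \<Rightarrow> real. (\<forall>\<alpha>. smooth_on U (\<psi> \<alpha>)) \<and>
           (\<forall>u\<in>U. \<forall>\<alpha> i j. pinner eps (n \<alpha> u) (pd (pd r j) i u) = pd (pd (\<psi> \<alpha>) j) i u)"
proof -
  define \<omega> where "\<omega> \<alpha> i j u = pinner eps (n \<alpha> u) (pd (pd r j) i u)" for \<alpha> i j u
  have "\<exists>\<psi>. smooth_on U \<psi> \<and> (\<forall>u\<in>U. \<forall>i j. pd (pd \<psi> j) i u = \<omega> \<alpha> i j u)" for \<alpha>
  proof (rule codazzi_tensor_is_hessian[OF U_open U_sc])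
    show "\<forall>i j. smooth_on U (\<omega> \<alpha> i j)"
      unfolding \<omega>_def using U_open r_smooth n_smooth by (intro allI smooth_on_pinner smooth_on_pd) auto
    show "\<forall>u\<in>U. \<forall>i j. \<omega> \<alpha> i j u = \<omega> \<alpha> j i u"
      unfolding \<omega>_def using pd_pd_commute_smooth[OF U_open _ r_smooth] by simp
    show "\<forall>u\<in>U. \<forall>i j k. pd (\<omega> \<alpha> i j) k u = pd (\<omega> \<alpha> k j) i u"
      unfolding \<omega>_def using torsionless_second_fundamental_form_codazzi[OF U_open _ r_smooth n_smooth[rule_format] flat_coords]
        torsionless by blast
  qed
  then obtain \<psi> where "\<And>\<alpha>. smooth_on U (\<psi> \<alpha>)" "\<And>\<alpha>. \<forall>u\<in>U. \<forall>i j. pd (pd (\<psi> \<alpha>) j) i u = \<omega> \<alpha> i j u"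
    by metis
  then show ?thesis
    unfolding \<omega>_def by (intro exI[of _ \<psi>]) auto
qed

end
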